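(* Let $E$ be a uniformly convex Banach space. For all continuous actions of $H_3(\mathbb{R})$ on $E$ by affine isometries, all $a,b,c\in\mathbb{R}$ and all $\xi\in E$, \[\|\nu_{abc}\cdot\xi-\widetilde{\nu}_{cba}\cdot\xi\|\le 2e^{a+c-b}\max_{|r|\le e^b}\|Z(r)\cdot\xi-\xi\|.\]
   Context: $H_3(\mathbb{R})$ is the simply connected Lie group whose Lie algebra has basis $\mathfrak{X},\mathfrak{Y},\mathfrak{Z}$ with $[\mathfrak{X},\mathfrak{Y}]=\mathfrak{Z}$ and $\mathfrak{Z}$ central; $X(t)=\exp(t\mathfrak{X})$, etc. $\gamma_a$ is the centered Gaussian with variance $e^{2a}$, $L(\gamma_a)$ its pushforward under a one-parameter subgroup $L$; $\nu_{abc}=X(\gamma_a)Z(\gamma_b)Y(\gamma_c)$ and $\widetilde{\nu}_{cba}=Y(\gamma_c)Z(\gamma_b)X(\gamma_a)$ (convolution products); $\mu\cdot\xi=\int g\cdot\xi\,d\mu(g)$. *)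

theory Defs
  imports "HOL-Probability.Probability"
begin

definition uniformly_convex :: "'e::real_normed_vector itself \<Rightarrow> bool" where
  "uniformly_convex (_::'e itself) \<longleftrightarrow>
     (\<forall>\<epsilon>>0. \<exists>\<delta>>0. \<forall>x y::'e. norm x \<le> 1 \<and> norm y \<le> 1 \<and> norm (x - y) \<ge> \<epsilon>
        \<longrightarrow> norm ((1/2) *\<^sub>R (x + y)) \<le> 1 - \<delta>)"

text \<open>The real Heisenberg group H3(R), realised as upper unitriangular 3x3 matrices
  [[1,x,z],[0,1,y],[0,0,1]] in coordinates (x,y,z).  The basis X = E12, Y = E23,
  Z = E13 of the Lie algebra satisfies [X,Y] = Z with Z central, and
  exp(tX) = (t,0,0), exp(tY) = (0,t,0), exp(tZ) = (0,0,t).\<close>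
type_synonym heis = "real \<times> real \<times> real"

definition hmul :: "heis \<Rightarrow> heis \<Rightarrow> heis" where
  "hmul g h = (case g of (x, y, z) \<Rightarrow> case h of (x', y', z') \<Rightarrow>
                 (x + x', y + y', z + z' + x * y'))"

definition hone :: heis where "hone = (0, 0, 0)"

definition Xg :: "real \<Rightarrow> heis" where "Xg t = (t, 0, 0)"
definition Yg :: "real \<Rightarrow> heis" where "Yg t = (0, t, 0)"
definition Zg :: "real \<Rightarrow> heis" where "Zg t = (0, 0, t)"

definition cont_affine_isometric_action :: "(heis \<Rightarrow> 'e::real_normed_vector \<Rightarrow> 'e) \<Rightarrow> bool" where
  "cont_affine_isometric_action \<alpha> \<longleftrightarrow>
     (\<alpha> hone = id) \<and>
     (\<forall>g h. \<alpha> (hmul g h) = \<alpha> g \<circ> \<alpha> h) \<and>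
     (\<forall>g. \<exists>L b. linear L \<and> (\<forall>x. \<alpha> g x = L x + b)) \<and>
     (\<forall>g x y. dist (\<alpha> g x) (\<alpha> g y) = dist x y) \<and>
     continuous_on UNIV (\<lambda>p::heis \<times> 'e. \<alpha> (fst p) (snd p))"

text \<open>Density of the centred Gaussian gamma_a of variance e^(2a).\<close>
definition gdens :: "real \<Rightarrow> real \<Rightarrow> real" where
  "gdens a x = normal_density 0 (exp a) x"

text \<open>nu_abc . xi = integral of g.xi against X(gamma_a) * Z(gamma_b) * Y(gamma_c), i.e.
  the integral of X(s)Z(u)Y(t).xi with respect to gamma_a(ds) gamma_b(du) gamma_c(dt);
  written out as an integral against the Gaussian densities on R^3.\<close>
definition nu_act :: "(heis \<Rightarrow> 'e::real_normed_vector \<Rightarrow> 'e) \<Rightarrow> real \<Rightarrow> real \<Rightarrow> real \<Rightarrow> 'e \<Rightarrow> 'e" where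
  "nu_act \<alpha> a b c \<xi> = integral UNIV (\<lambda>(s, u, t).
      (gdens a s * gdens b u * gdens c t) *\<^sub>R \<alpha> (hmul (hmul (Xg s) (Zg u)) (Yg t)) \<xi>)"

text \<open>tilde-nu_cba . xi for tilde-nu_cba = Y(gamma_c) * Z(gamma_b) * X(gamma_a).\<close>
definition nut_act :: "(heis \<Rightarrow> 'e::real_normed_vector \<Rightarrow> 'e) \<Rightarrow> real \<Rightarrow> real \<Rightarrow> real \<Rightarrow> 'e \<Rightarrow> 'e" where
  "nut_act \<alpha> c b a \<xi> = integral UNIV (\<lambda>(t, u, s).
      (gdens c t * gdens b u * gdens a s) *\<^sub>R \<alpha> (hmul (hmul (Yg t) (Zg u)) (Xg s)) \<xi>)"

end

theory Submission
  imports Defs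
begin

text \<open>Since X(s) Z(u) Y(t) = (s, t, u + s t) and Y(t) Z(u) X(s) = (s, t, u), the substitution
  u \<mapsto> u - s t shows that nu_abc.xi - tilde-nu_cba.xi is the integral of
  gamma_a(s) gamma_c(t) (gamma_b(u - s t) - gamma_b(u)) g.xi over g = (s, t, u). As the bracket
  has u-integral zero, g.xi may be replaced by g.xi - (s, t, 0).xi, whose norm is the
  displacement of xi under Z(u); by subadditivity this is at most M (1 + |u| / e^b), where M is
  the maximal displacement under Z(r), |r| \<le> e^b. The weighted L1 distance of a Gaussian
  density of standard deviation e^b from its translate by h is at most pi |h| / e^b, and
  E|s| E|t| = (2 / pi) e^(a + c); together these give 2 e^(a + c - b) M. The integrals take
  values in E and are reduced to real Lebesgue integrals by a norming functional
  (Hahn--Banach).\<close>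

section \<open>Norming functionals\<close>

text \<open>A linear functional on a subspace is encoded by its graph. Zorn's lemma applied to
  graphs dominated by the norm and taking the value norm v at v yields a norming
  functional for v (Hahn--Banach).\<close>
definition norming_partial_functional :: "'e::real_normed_vector \<Rightarrow> ('e \<times> real) set \<Rightarrow> bool" where
  "norming_partial_functional v G \<longleftrightarrow>
     (\<forall>x y y'. (x, y) \<in> G \<longrightarrow> (x, y') \<in> G \<longrightarrow> y = y') \<and>
     (\<forall>x y x' y'. (x, y) \<in> G \<longrightarrow> (x', y') \<in> G \<longrightarrow> (x + x', y + y') \<in> G) \<and>
     (\<forall>c x y. (x, y) \<in> G \<longrightarrow> (c *\<^sub>R x, c * y) \<in> G) \<and>
     (\<forall>x y. (x, y) \<in> G \<longrightarrow> y \<le> norm x) \<and>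
     (v, norm v) \<in> G"

lemma norming_partial_functional_line:
  "norming_partial_functional v {(c *\<^sub>R v, c * norm v) | c. True}"
  unfolding norming_partial_functional_def
proof (intro conjI allI impI)
  fix x y y' assume "(x, y) \<in> {(c *\<^sub>R v, c * norm v) | c. True}"
    and "(x, y') \<in> {(c *\<^sub>R v, c * norm v) | c. True}"
  then obtain c c' where "x = c *\<^sub>R v" "y = c * norm v" "x = c' *\<^sub>R v" "y' = c' * norm v"
    by blast
  then show "y = y'"
    by (cases "v = 0") (auto dest: scaleR_cancel_right[THEN iffD1])
next
  fix x y x' y' assume "(x, y) \<in> {(c *\<^sub>R v, c * norm v) | c. True}"
    and "(x', y') \<in> {(c *\<^sub>R v, c * norm v) | c. True}"
  then obtain c c' where "x = c *\<^sub>R v" "y = c * norm v" "x' = c' *\<^sub>R v" "y' = c' * norm v"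
    by blast
  then have "(x + x', y + y') = ((c + c') *\<^sub>R v, (c + c') * norm v)"
    by (simp add: algebra_simps)
  then show "(x + x', y + y') \<in> {(c *\<^sub>R v, c * norm v) | c. True}" by blast
next
  fix r x y assume "(x, y) \<in> {(c *\<^sub>R v, c * norm v) | c. True}"
  then obtain c where "x = c *\<^sub>R v" "y = c * norm v" by blast
  then have "(r *\<^sub>R x, r * y) = ((r * c) *\<^sub>R v, (r * c) * norm v)" by simp
  then show "(r *\<^sub>R x, r * y) \<in> {(c *\<^sub>R v, c * norm v) | c. True}" by blast
next
  fix x y assume "(x, y) \<in> {(c *\<^sub>R v, c * norm v) | c. True}"
  then obtain c where "x = c *\<^sub>R v" "y = c * norm v" by blast
  then show "y \<le> norm x" by (simp add: mult_right_mono abs_ge_self)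
next
  have "(v, norm v) = (1 *\<^sub>R v, 1 * norm v)" by simp
  then show "(v, norm v) \<in> {(c *\<^sub>R v, c * norm v) | c. True}" by blast
qed

lemma norming_partial_functional_Union_chain:
  assumes "C \<noteq> {}" "subset.chain {G. norming_partial_functional v G} C"
  shows "norming_partial_functional v (\<Union>C)"
proof -
  have mem: "\<And>G. G \<in> C \<Longrightarrow> norming_partial_functional v G"
    and chain: "\<And>G H. G \<in> C \<Longrightarrow> H \<in> C \<Longrightarrow> G \<subseteq> H \<or> H \<subseteq> G"
    using assms(2) by (auto simp: subset_chain_def)
  have common: "\<exists>G\<in>C. p \<in> G \<and> q \<in> G" if "p \<in> \<Union>C" "q \<in> \<Union>C" for p q
    using that chain by blast
  show ?thesis
    unfolding norming_partial_functional_def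
  proof (intro conjI allI impI)
    fix x y y' assume "(x, y) \<in> \<Union>C" "(x, y') \<in> \<Union>C"
    then obtain G where G: "G \<in> C" "(x, y) \<in> G" "(x, y') \<in> G" using common by blast
    with mem[OF G(1)] show "y = y'" unfolding norming_partial_functional_def by blast
  next
    fix x y x' y' assume "(x, y) \<in> \<Union>C" "(x', y') \<in> \<Union>C"
    then obtain G where G: "G \<in> C" "(x, y) \<in> G" "(x', y') \<in> G" using common by blast
    with mem[OF G(1)] show "(x + x', y + y') \<in> \<Union>C" unfolding norming_partial_functional_def by blast
  next
    fix r x y assume "(x, y) \<in> \<Union>C"
    then obtain G where G: "G \<in> C" "(x, y) \<in> G" by blast
    with mem[OF G(1)] show "(r *\<^sub>R x, r * y) \<in> \<Union>C" unfolding norming_partial_functional_def by blast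
  next
    fix x y assume "(x, y) \<in> \<Union>C"
    then obtain G where G: "G \<in> C" "(x, y) \<in> G" by blast
    with mem[OF G(1)] show "y \<le> norm x" unfolding norming_partial_functional_def by blast
  next
    obtain G where G: "G \<in> C" using assms(1) by blast
    with mem[OF G] show "(v, norm v) \<in> \<Union>C" unfolding norming_partial_functional_def by blast
  qed
qed

lemma extension_value_dominated:
  fixes d x0 :: "'e::real_normed_vector"
  assumes "z \<le> norm d"
    and lower: "\<And>r. r * z - norm (r *\<^sub>R d - x0) \<le> c"
    and upper: "\<And>r. c \<le> norm (r *\<^sub>R d + x0) - r * z"
  shows "z + t * c \<le> norm (d + t *\<^sub>R x0)"
proof (cases t "0::real" rule: linorder_cases)
  case less
  have "(- t) * norm ((- 1 / t) *\<^sub>R d - x0) = norm ((- t) *\<^sub>R ((- 1 / t) *\<^sub>R d - x0))"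
    using less by simp
  also have "(- t) *\<^sub>R ((- 1 / t) *\<^sub>R d - x0) = d + t *\<^sub>R x0"
    using less by (simp add: algebra_simps)
  finally have "(- t) * ((- 1 / t) * z - norm ((- 1 / t) *\<^sub>R d - x0)) = z - norm (d + t *\<^sub>R x0)"
    using less by (simp add: algebra_simps)
  moreover have "(- t) * ((- 1 / t) * z - norm ((- 1 / t) *\<^sub>R d - x0)) \<le> (- t) * c"
    by (rule mult_left_mono[OF lower]) (use less in simp)
  ultimately show ?thesis by simp
next
  case greater
  have "t * norm ((1 / t) *\<^sub>R d + x0) = norm (t *\<^sub>R ((1 / t) *\<^sub>R d + x0))"
    using greater by simp
  also have "t *\<^sub>R ((1 / t) *\<^sub>R d + x0) = d + t *\<^sub>R x0"
    using greater by (simp add: algebra_simps)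
  finally have "t * (norm ((1 / t) *\<^sub>R d + x0) - (1 / t) * z) = norm (d + t *\<^sub>R x0) - z"
    using greater by (simp add: algebra_simps)
  moreover have "t * c \<le> t * (norm ((1 / t) *\<^sub>R d + x0) - (1 / t) * z)"
    by (rule mult_left_mono[OF upper]) (use greater in simp)
  ultimately show ?thesis by simp
qed (use assms(1) in simp)

lemma norming_partial_functional_coefficient_unique:
  assumes G: "norming_partial_functional v G" and x0: "\<nexists>y. (x0, y) \<in> G"
    and in_G: "(d1, z1) \<in> G" "(d2, z2) \<in> G" and eq: "d1 + t1 *\<^sub>R x0 = d2 + t2 *\<^sub>R x0"
  shows "t1 = t2"
proof (rule ccontr)
  assume "t1 \<noteq> t2"
  have add: "\<And>x y x' y'. (x, y) \<in> G \<Longrightarrow> (x', y') \<in> G \<Longrightarrow> (x + x', y + y') \<in> G"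
    and scale: "\<And>c x y. (x, y) \<in> G \<Longrightarrow> (c *\<^sub>R x, c * y) \<in> G"
    using G unfolding norming_partial_functional_def by blast+
  have "((1 / (t1 - t2)) *\<^sub>R (d2 + (- 1) *\<^sub>R d1), (1 / (t1 - t2)) * (z2 + (- 1) * z1)) \<in> G"
    by (intro scale add in_G)
  moreover have "d2 + (- 1) *\<^sub>R d1 = (t1 - t2) *\<^sub>R x0"
    using eq by (simp add: algebra_simps)
  then have "(1 / (t1 - t2)) *\<^sub>R (d2 + (- 1) *\<^sub>R d1) = x0"
    using \<open>t1 \<noteq> t2\<close> by simp
  ultimately show False using x0 by auto
qed

lemma norming_partial_functional_extend_graph:
  assumes G: "norming_partial_functional v G" and x0: "\<nexists>y. (x0, y) \<in> G"
    and lower: "\<And>x y. (x, y) \<in> G \<Longrightarrow> y - norm (x - x0) \<le> c"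
    and upper: "\<And>x y. (x, y) \<in> G \<Longrightarrow> c \<le> norm (x + x0) - y"
  shows "norming_partial_functional v {(d + t *\<^sub>R x0, z + t * c) | d z t. (d, z) \<in> G}"
    (is "norming_partial_functional v ?G'")
proof -
  have unique: "\<And>x y y'. (x, y) \<in> G \<Longrightarrow> (x, y') \<in> G \<Longrightarrow> y = y'"
    and add: "\<And>x y x' y'. (x, y) \<in> G \<Longrightarrow> (x', y') \<in> G \<Longrightarrow> (x + x', y + y') \<in> G"
    and scale: "\<And>c x y. (x, y) \<in> G \<Longrightarrow> (c *\<^sub>R x, c * y) \<in> G"
    and bound: "\<And>x y. (x, y) \<in> G \<Longrightarrow> y \<le> norm x"
    and v: "(v, norm v) \<in> G"
    using G unfolding norming_partial_functional_def by blast+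
  show ?thesis
    unfolding norming_partial_functional_def
  proof (intro conjI allI impI)
    fix x y y' assume "(x, y) \<in> ?G'" "(x, y') \<in> ?G'"
    then obtain d1 z1 t1 d2 z2 t2 where in_G: "(d1, z1) \<in> G" "(d2, z2) \<in> G"
      and x: "x = d1 + t1 *\<^sub>R x0" "x = d2 + t2 *\<^sub>R x0"
      and y: "y = z1 + t1 * c" "y' = z2 + t2 * c"
      by blast
    have "t1 = t2"
      using norming_partial_functional_coefficient_unique[OF G x0 in_G] x by simp
    with x have "d1 = d2" by simp
    with in_G have "z1 = z2" using unique by blast
    with y \<open>t1 = t2\<close> show "y = y'" by simp
  next
    fix x y x' y' assume "(x, y) \<in> ?G'" "(x', y') \<in> ?G'"
    then obtain d1 z1 t1 d2 z2 t2 where in_G: "(d1, z1) \<in> G" "(d2, z2) \<in> G"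
      and "x = d1 + t1 *\<^sub>R x0" "y = z1 + t1 * c" "x' = d2 + t2 *\<^sub>R x0" "y' = z2 + t2 * c"
      by blast
    then have "(x + x', y + y') = ((d1 + d2) + (t1 + t2) *\<^sub>R x0, (z1 + z2) + (t1 + t2) * c)"
      by (simp add: algebra_simps)
    then show "(x + x', y + y') \<in> ?G'"
      using add[OF in_G] by blast
  next
    fix r x y assume "(x, y) \<in> ?G'"
    then obtain d z t where dz: "(d, z) \<in> G" and "x = d + t *\<^sub>R x0" "y = z + t * c"
      by blast
    then have "(r *\<^sub>R x, r * y) = (r *\<^sub>R d + (r * t) *\<^sub>R x0, r * z + (r * t) * c)"
      by (simp add: algebra_simps)
    then show "(r *\<^sub>R x, r * y) \<in> ?G'"
      using scale[OF dz] by blast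
  next
    fix x y assume "(x, y) \<in> ?G'"
    then obtain d z t where dz: "(d, z) \<in> G" and "x = d + t *\<^sub>R x0" "y = z + t * c"
      by blast
    moreover have "z + t * c \<le> norm (d + t *\<^sub>R x0)"
      using bound[OF dz] lower[OF scale[OF dz]] upper[OF scale[OF dz]]
      by (intro extension_value_dominated) auto
    ultimately show "y \<le> norm x" by simp
  next
    have "(v, norm v) = (v + 0 *\<^sub>R x0, norm v + 0 * c)" by simp
    then show "(v, norm v) \<in> ?G'" using v by blast
  qed
qed

lemma norming_partial_functional_extend:
  assumes G: "norming_partial_functional v G" and x0: "\<nexists>y. (x0, y) \<in> G"
  shows "\<exists>G'. norming_partial_functional v G' \<and> G \<subset> G'"
proof -
  have add: "\<And>x y x' y'. (x, y) \<in> G \<Longrightarrow> (x', y') \<in> G \<Longrightarrow> (x + x', y + y') \<in> G"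
    and bound: "\<And>x y. (x, y) \<in> G \<Longrightarrow> y \<le> norm x"
    and scale: "\<And>c x y. (x, y) \<in> G \<Longrightarrow> (c *\<^sub>R x, c * y) \<in> G"
    and v: "(v, norm v) \<in> G"
    using G unfolding norming_partial_functional_def by blast+
  have zero: "(0, 0) \<in> G" using scale[OF v, of 0] by simp
  \<comment> \<open>Every admissible value c for x0 lies between these two families of bounds.\<close>
  have separated: "y - norm (x - x0) \<le> norm (x' + x0) - y'" if "(x, y) \<in> G" "(x', y') \<in> G"
    for x y x' y'
  proof -
    have "y + y' \<le> norm ((x - x0) + (x' + x0))" using bound[OF add[OF that]] by simp
    also have "\<dots> \<le> norm (x - x0) + norm (x' + x0)" by (rule norm_triangle_ineq)
    finally show ?thesis by simp
  qed
  define c where "c = (SUP p\<in>G. snd p - norm (fst p - x0))"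
  have bdd: "bdd_above ((\<lambda>p. snd p - norm (fst p - x0)) ` G)"
    unfolding bdd_above_def using separated[OF _ zero] by (intro exI[of _ "norm x0"]) auto
  have lower: "y - norm (x - x0) \<le> c" if "(x, y) \<in> G" for x y
    unfolding c_def using cSUP_upper[OF that bdd] by simp
  have upper: "c \<le> norm (x + x0) - y" if "(x, y) \<in> G" for x y
  proof -
    have "snd p - norm (fst p - x0) \<le> norm (x + x0) - y" if "p \<in> G" for p
      using separated[of "fst p" "snd p"] that \<open>(x, y) \<in> G\<close> by simp
    then show ?thesis unfolding c_def using zero by (intro cSUP_least) auto
  qed
  define G' where "G' = {(d + t *\<^sub>R x0, z + t * c) | d z t. (d, z) \<in> G}"
  have "norming_partial_functional v G'"
    unfolding G'_def using G x0 lower upper by (rule norming_partial_functional_extend_graph)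
  moreover have "G \<subseteq> G'"
  proof (rule subrelI)
    fix d z assume "(d, z) \<in> G"
    moreover have "(d, z) = (d + 0 *\<^sub>R x0, z + 0 * c)" by simp
    ultimately show "(d, z) \<in> G'" unfolding G'_def by blast
  qed
  moreover have "(x0, c) \<in> G' - G"
  proof -
    have "(x0, c) = (0 + 1 *\<^sub>R x0, 0 + 1 * c)" by simp
    then show ?thesis unfolding G'_def using zero x0 by blast
  qed
  ultimately show ?thesis by blast
qed

theorem norming_functional_exists:
  fixes v :: "'e::real_normed_vector"
  shows "\<exists>l. bounded_linear l \<and> (\<forall>x. \<bar>l x\<bar> \<le> norm x) \<and> l v = norm v"
proof -
  have "\<exists>M\<in>{G. norming_partial_functional v G}. \<forall>G\<in>{G. norming_partial_functional v G}. M \<subseteq> G \<longrightarrow> G = M"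
    by (rule subset_Zorn_nonempty)
      (use norming_partial_functional_line norming_partial_functional_Union_chain in blast)+
  then obtain M where M: "norming_partial_functional v M"
    and maximal: "\<And>G. norming_partial_functional v G \<Longrightarrow> M \<subseteq> G \<Longrightarrow> G = M"
    by blast
  have total: "\<exists>y. (x, y) \<in> M" for x
  proof (rule ccontr)
    assume "\<nexists>y. (x, y) \<in> M"
    then obtain G where "norming_partial_functional v G" "M \<subset> G"
      using norming_partial_functional_extend[OF M] by blast
    then show False using maximal[of G] by blast
  qed
  have unique: "\<And>x y y'. (x, y) \<in> M \<Longrightarrow> (x, y') \<in> M \<Longrightarrow> y = y'"
    and add: "\<And>x y x' y'. (x, y) \<in> M \<Longrightarrow> (x', y') \<in> M \<Longrightarrow> (x + x', y + y') \<in> M"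
    and scale: "\<And>c x y. (x, y) \<in> M \<Longrightarrow> (c *\<^sub>R x, c * y) \<in> M"
    and bound: "\<And>x y. (x, y) \<in> M \<Longrightarrow> y \<le> norm x"
    and v: "(v, norm v) \<in> M"
    using M unfolding norming_partial_functional_def by blast+
  define l where "l x = (THE y. (x, y) \<in> M)" for x
  have graph: "(x, l x) \<in> M" for x
  proof -
    obtain y where y: "(x, y) \<in> M" using total by blast
    have "l x = y" unfolding l_def by (rule the_equality) (use y unique in blast)+
    then show ?thesis using y by simp
  qed
  have l_eq: "l x = y" if "(x, y) \<in> M" for x y
    using unique[OF graph that] .
  have l_add: "l (x + y) = l x + l y" for x y
    using l_eq[OF add[OF graph graph]] .
  have l_scale: "l (r *\<^sub>R x) = r * l x" for r x
    using l_eq[OF scale[OF graph]] .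
  have l_bound: "\<bar>l x\<bar> \<le> norm x" for x
    using bound[OF graph, of x] bound[OF graph, of "- x"] l_scale[of "- 1" x] by simp
  have "bounded_linear l"
    by (rule bounded_linear_intro[where K = 1]) (use l_add l_scale l_bound in auto)
  then show ?thesis using l_bound l_eq[OF v] by blast
qed

section \<open>Isometric actions of the Heisenberg group\<close>

lemma subadditive_linear_growth:
  fixes d :: "real \<Rightarrow> real"
  assumes d0: "d 0 = 0" and subadd: "\<And>x y. d (x + y) \<le> d x + d y"
    and local_bound: "\<And>x. \<bar>x\<bar> \<le> \<delta> \<Longrightarrow> d x \<le> m" and "\<delta> > 0" and "m \<ge> 0"
  shows "d r \<le> m * (1 + \<bar>r\<bar> / \<delta>)"
proof -
  have mult: "d (real k * y) \<le> real k * d y" for k y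
  proof (induction k)
    case (Suc k)
    have "d (real (Suc k) * y) \<le> d (real k * y) + d y"
      using subadd[of "real k * y" y] by (simp add: algebra_simps)
    with Suc show ?case by (simp add: algebra_simps)
  qed (simp add: d0)
  define n where "n = nat \<lceil>\<bar>r\<bar> / \<delta>\<rceil>"
  have n_ge: "\<bar>r\<bar> \<le> real n * \<delta>" and n_le: "real n \<le> \<bar>r\<bar> / \<delta> + 1"
    unfolding n_def using \<open>\<delta> > 0\<close> by (auto simp: pos_divide_le_eq[symmetric] of_nat_nat)
  show ?thesis
  proof (cases "n = 0")
    case True
    then show ?thesis using n_ge d0 \<open>m \<ge> 0\<close> by simp
  next
    case False
    have "\<bar>r / real n\<bar> \<le> \<delta>"
      using n_ge False by (simp add: divide_le_eq mult.commute)
    then have "d (r / real n) \<le> m" by (rule local_bound)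
    moreover have "d r \<le> real n * d (r / real n)"
      using mult[of n "r / real n"] False by simp
    ultimately have "d r \<le> real n * m"
      by (meson mult_left_mono of_nat_0_le_iff order_trans)
    also have "\<dots> \<le> (\<bar>r\<bar> / \<delta> + 1) * m"
      using n_le \<open>m \<ge> 0\<close> by (rule mult_right_mono)
    finally show ?thesis by (simp add: algebra_simps)
  qed
qed

lemma hmul_XZY: "hmul (hmul (Xg s) (Zg u)) (Yg t) = (s, t, u + s * t)"
  by (simp add: hmul_def Xg_def Yg_def Zg_def)

lemma hmul_YZX: "hmul (hmul (Yg t) (Zg u)) (Xg s) = (s, t, u)"
  by (simp add: hmul_def Xg_def Yg_def Zg_def)

lemma hmul_Zg_right: "hmul (s, t, u) (Zg v) = (s, t, u + v)"
  by (simp add: hmul_def Zg_def)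

lemma one_parameter_Xg: "hmul (Xg x) (Xg y) = Xg (x + y)" "Xg 0 = hone" "continuous_on UNIV Xg"
  unfolding hmul_def Xg_def hone_def by (auto intro!: continuous_intros)

lemma one_parameter_Yg: "hmul (Yg x) (Yg y) = Yg (x + y)" "Yg 0 = hone" "continuous_on UNIV Yg"
  unfolding hmul_def Yg_def hone_def by (auto intro!: continuous_intros)

lemma one_parameter_Zg: "hmul (Zg x) (Zg y) = Zg (x + y)" "Zg 0 = hone" "continuous_on UNIV Zg"
  unfolding hmul_def Zg_def hone_def by (auto intro!: continuous_intros)

locale heis_isometric_action =
  fixes \<alpha> :: "heis \<Rightarrow> 'e::real_normed_vector \<Rightarrow> 'e"
  assumes cont_affine_isometric: "cont_affine_isometric_action \<alpha>"
begin

lemma act_hone: "\<alpha> hone x = x"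
  using cont_affine_isometric unfolding cont_affine_isometric_action_def by simp

lemma act_hmul: "\<alpha> (hmul g h) x = \<alpha> g (\<alpha> h x)"
  using cont_affine_isometric unfolding cont_affine_isometric_action_def by (metis comp_apply)

lemma norm_act_diff: "norm (\<alpha> g x - \<alpha> g y) = norm (x - y)"
  using cont_affine_isometric unfolding cont_affine_isometric_action_def by (metis dist_norm)

lemma continuous_on_act [continuous_intros]:
  assumes "continuous_on S f" "continuous_on S g"
  shows "continuous_on S (\<lambda>x. \<alpha> (f x) (g x))"
proof -
  have "continuous_on UNIV (\<lambda>p. \<alpha> (fst p) (snd p))"
    using cont_affine_isometric unfolding cont_affine_isometric_action_def by simp
  from continuous_on_compose2[OF this continuous_on_Pair[OF assms]] show ?thesis by simp
qed

lemma displacement_hmul_le: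
  "norm (\<alpha> (hmul g h) \<xi> - \<xi>) \<le> norm (\<alpha> g \<xi> - \<xi>) + norm (\<alpha> h \<xi> - \<xi>)"
proof -
  have "norm (\<alpha> (hmul g h) \<xi> - \<xi>) \<le> norm (\<alpha> g (\<alpha> h \<xi>) - \<alpha> g \<xi>) + norm (\<alpha> g \<xi> - \<xi>)"
    unfolding act_hmul using norm_triangle_ineq[of "\<alpha> g (\<alpha> h \<xi>) - \<alpha> g \<xi>" "\<alpha> g \<xi> - \<xi>"] by simp
  then show ?thesis unfolding norm_act_diff by simp
qed

context
  fixes L :: "real \<Rightarrow> heis"
  assumes L_add: "\<And>x y. hmul (L x) (L y) = L (x + y)" and L_zero: "L 0 = hone"
    and L_cont: "continuous_on UNIV L"
begin

lemma bdd_above_displacement: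
  "bdd_above ((\<lambda>r. norm (\<alpha> (L r) \<xi> - \<xi>)) ` {-\<delta>..\<delta>})"
proof -
  have "continuous_on UNIV (\<lambda>r. norm (\<alpha> (L r) \<xi> - \<xi>))"
    by (intro continuous_intros L_cont)
  then have "compact ((\<lambda>r. norm (\<alpha> (L r) \<xi> - \<xi>)) ` {-\<delta>..\<delta>})"
    by (intro compact_continuous_image) (auto intro: continuous_on_subset)
  then show ?thesis by (intro bounded_imp_bdd_above compact_imp_bounded)
qed

lemma displacement_le_SUP:
  assumes "\<delta> > 0"
  shows "norm (\<alpha> (L r) \<xi> - \<xi>) \<le> (SUP x\<in>{-\<delta>..\<delta>}. norm (\<alpha> (L x) \<xi> - \<xi>)) * (1 + \<bar>r\<bar> / \<delta>)"
proof (rule subadditive_linear_growth[OF _ _ _ assms])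
  show "norm (\<alpha> (L 0) \<xi> - \<xi>) = 0" by (simp add: L_zero act_hone)
  show "norm (\<alpha> (L (x + y)) \<xi> - \<xi>) \<le> norm (\<alpha> (L x) \<xi> - \<xi>) + norm (\<alpha> (L y) \<xi> - \<xi>)" for x y
    using displacement_hmul_le[of "L x" "L y"] by (simp add: L_add)
  show local_bound: "norm (\<alpha> (L x) \<xi> - \<xi>) \<le> (SUP x\<in>{-\<delta>..\<delta>}. norm (\<alpha> (L x) \<xi> - \<xi>))"
    if "\<bar>x\<bar> \<le> \<delta>" for x
    using that by (intro cSUP_upper bdd_above_displacement) auto
  show "0 \<le> (SUP x\<in>{-\<delta>..\<delta>}. norm (\<alpha> (L x) \<xi> - \<xi>))"
    using local_bound[of 0] assms by (simp add: L_zero act_hone)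
qed

end

lemma orbit_linear_growth:
  "\<exists>K\<ge>0. \<forall>x y z. norm (\<alpha> (x, y, z) \<xi>) \<le> K * (1 + \<bar>x\<bar> + \<bar>y\<bar> + \<bar>z\<bar>)"
proof -
  define m where "m L = (SUP r\<in>{-1..1}. norm (\<alpha> (L r) \<xi> - \<xi>))" for L :: "real \<Rightarrow> heis"
  have X: "norm (\<alpha> (Xg r) \<xi> - \<xi>) \<le> m Xg * (1 + \<bar>r\<bar>)"
    and Y: "norm (\<alpha> (Yg r) \<xi> - \<xi>) \<le> m Yg * (1 + \<bar>r\<bar>)"
    and Z: "norm (\<alpha> (Zg r) \<xi> - \<xi>) \<le> m Zg * (1 + \<bar>r\<bar>)" for r
    using displacement_le_SUP[OF one_parameter_Xg, of 1]
      displacement_le_SUP[OF one_parameter_Yg, of 1]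
      displacement_le_SUP[OF one_parameter_Zg, of 1]
    unfolding m_def by simp_all
  have m_nonneg: "m Xg \<ge> 0" "m Yg \<ge> 0" "m Zg \<ge> 0"
    using order_trans[OF norm_ge_zero X[of 0]] order_trans[OF norm_ge_zero Y[of 0]]
      order_trans[OF norm_ge_zero Z[of 0]] by simp_all
  define K where "K = norm \<xi> + m Xg + m Yg + m Zg"
  have "norm (\<alpha> (x, y, z) \<xi>) \<le> K * (1 + \<bar>x\<bar> + \<bar>y\<bar> + \<bar>z\<bar>)" for x y z
  proof -
    have "norm (\<alpha> (x, y, z) \<xi> - \<xi>)
        \<le> norm (\<alpha> (Yg y) \<xi> - \<xi>) + norm (\<alpha> (Zg z) \<xi> - \<xi>) + norm (\<alpha> (Xg x) \<xi> - \<xi>)"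
      using displacement_hmul_le[of "hmul (Yg y) (Zg z)" "Xg x" \<xi>]
        displacement_hmul_le[of "Yg y" "Zg z" \<xi>]
      unfolding hmul_YZX by linarith
    also have "\<dots> \<le> m Yg * (1 + \<bar>y\<bar>) + m Zg * (1 + \<bar>z\<bar>) + m Xg * (1 + \<bar>x\<bar>)"
      using X Y Z by (intro add_mono)
    finally have "norm (\<alpha> (x, y, z) \<xi>) \<le> norm \<xi> + m Yg * (1 + \<bar>y\<bar>) + m Zg * (1 + \<bar>z\<bar>) + m Xg * (1 + \<bar>x\<bar>)"
      using norm_triangle_sub[of "\<alpha> (x, y, z) \<xi>" \<xi>] by simp
    also have "\<dots> \<le> K * (1 + \<bar>x\<bar> + \<bar>y\<bar> + \<bar>z\<bar>)"
    proof -
      have le: "c * (1 + \<bar>w\<bar>) \<le> c * (1 + \<bar>x\<bar> + \<bar>y\<bar> + \<bar>z\<bar>)"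
        if "c \<ge> 0" "\<bar>w\<bar> \<le> \<bar>x\<bar> + \<bar>y\<bar> + \<bar>z\<bar>" for c w
        using that by (intro mult_left_mono) auto
      have "m Xg * (1 + \<bar>x\<bar>) \<le> m Xg * (1 + \<bar>x\<bar> + \<bar>y\<bar> + \<bar>z\<bar>)"
        "m Yg * (1 + \<bar>y\<bar>) \<le> m Yg * (1 + \<bar>x\<bar> + \<bar>y\<bar> + \<bar>z\<bar>)"
        "m Zg * (1 + \<bar>z\<bar>) \<le> m Zg * (1 + \<bar>x\<bar> + \<bar>y\<bar> + \<bar>z\<bar>)"
        "norm \<xi> * (1 + \<bar>0\<bar>) \<le> norm \<xi> * (1 + \<bar>x\<bar> + \<bar>y\<bar> + \<bar>z\<bar>)"
        using m_nonneg by (intro le; simp)+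
      then show ?thesis unfolding K_def distrib_right by simp
    qed
    finally show ?thesis .
  qed
  moreover have "K \<ge> 0"
    unfolding K_def using m_nonneg by simp
  ultimately show ?thesis by blast
qed

end

section \<open>Gaussian densities\<close>

lemma normal_density_has_real_derivative:
  assumes "\<sigma> > 0"
  shows "(normal_density 0 \<sigma> has_real_derivative (- y / \<sigma>\<^sup>2 * normal_density 0 \<sigma> y)) (at y)"
  unfolding normal_density_def[abs_def] using assms
  by (auto intro!: derivative_eq_intros simp: field_simps power2_eq_square)

lemma normal_density_minus: "normal_density 0 \<sigma> (- x) = normal_density 0 \<sigma> x"
  by (simp add: normal_density_def)

lemma continuous_on_normal_density: "\<sigma> > 0 \<Longrightarrow> continuous_on UNIV (normal_density 0 \<sigma>)"
  unfolding normal_density_def[abs_def] by (intro continuous_intros) auto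

lemma has_bochner_integral_lborel_shift:
  fixes g :: "real \<Rightarrow> real"
  assumes "has_bochner_integral lborel g v"
  shows "has_bochner_integral lborel (\<lambda>u. g (u - h)) v"
  using lborel_has_bochner_integral_real_affine_iff[of 1 g v "- h"] assms by simp

lemma nn_integral_eq_has_bochner_integral:
  assumes "has_bochner_integral M f I" "\<And>x. f x \<ge> 0"
  shows "(\<integral>\<^sup>+x. ennreal (f x) \<partial>M) = ennreal I"
  using assms by (subst nn_integral_eq_integral) (auto simp: has_bochner_integral_iff)

text \<open>The weight 1 + |u| / \<sigma> is the linear growth bound for the displacement of xi under
  the central one-parameter subgroup.\<close>
definition gaussian_shift_defect :: "real \<Rightarrow> real \<Rightarrow> ennreal" where
  "gaussian_shift_defect \<sigma> h = (\<integral>\<^sup>+u. ennreal (\<bar>normal_density 0 \<sigma> (u - h) - normal_density 0 \<sigma> u\<bar>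
      * (1 + \<bar>u\<bar> / \<sigma>)) \<partial>lborel)"

context
  fixes \<sigma> :: real
  assumes \<sigma>_pos: "\<sigma> > 0"
begin

abbreviation \<phi> :: "real \<Rightarrow> real" where "\<phi> \<equiv> normal_density 0 \<sigma>"

lemma has_bochner_integral_normal_density: "has_bochner_integral lborel \<phi> 1"
  using integrable_normal_density[of \<sigma> 0] integral_normal_density[of \<sigma> 0] \<sigma>_pos
  by (simp add: has_bochner_integral_iff)

lemma has_bochner_integral_normal_abs_moment:
  "has_bochner_integral lborel (\<lambda>x. \<phi> x * \<bar>x\<bar>) (\<sigma> * sqrt (2 / pi))"
  using normal_moment_abs_odd[OF \<sigma>_pos, of 0 0] by simp

lemma has_bochner_integral_normal_second_moment:
  "has_bochner_integral lborel (\<lambda>x. \<phi> x * x\<^sup>2) (\<sigma>\<^sup>2)"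
proof -
  have "has_bochner_integral lborel (\<lambda>x. \<phi> x * (x - 0) ^ (2 * 1)) (fact (2 * 1) / ((2 / \<sigma>\<^sup>2) ^ 1 * fact 1))"
    by (rule normal_moment_even) (rule \<sigma>_pos)
  moreover have "fact (2 * 1) / ((2 / \<sigma>\<^sup>2) ^ 1 * fact 1) = (\<sigma>\<^sup>2::real)"
    using \<sigma>_pos by (simp add: fact_numeral)
  ultimately show ?thesis by simp
qed

lemma gaussian_shift_defect_le_large: "gaussian_shift_defect \<sigma> h \<le> ennreal (2 + 2 * sqrt (2 / pi) + \<bar>h\<bar> / \<sigma>)"
proof -
  define f where "f u = (1 + \<bar>h\<bar> / \<sigma>) * \<phi> (u - h) + (1 / \<sigma>) * (\<phi> (u - h) * \<bar>u - h\<bar>)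
     + \<phi> u + (1 / \<sigma>) * (\<phi> u * \<bar>u\<bar>)" for u
  have "has_bochner_integral lborel f
      ((1 + \<bar>h\<bar> / \<sigma>) * 1 + (1 / \<sigma>) * (\<sigma> * sqrt (2 / pi)) + 1 + (1 / \<sigma>) * (\<sigma> * sqrt (2 / pi)))"
    unfolding f_def
    by (intro has_bochner_integral_add has_bochner_integral_mult_right
        has_bochner_integral_lborel_shift[where g = \<phi>]
        has_bochner_integral_lborel_shift[where g = "\<lambda>x. \<phi> x * \<bar>x\<bar>"]
        has_bochner_integral_normal_density has_bochner_integral_normal_abs_moment)
  then have "has_bochner_integral lborel f (2 + 2 * sqrt (2 / pi) + \<bar>h\<bar> / \<sigma>)"
    using \<sigma>_pos by (simp add: ac_simps)
  moreover have "f u \<ge> 0" for u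
    unfolding f_def using \<sigma>_pos by simp
  ultimately have f_integral: "(\<integral>\<^sup>+u. ennreal (f u) \<partial>lborel) = ennreal (2 + 2 * sqrt (2 / pi) + \<bar>h\<bar> / \<sigma>)"
    by (rule nn_integral_eq_has_bochner_integral)
  have "\<bar>\<phi> (u - h) - \<phi> u\<bar> * (1 + \<bar>u\<bar> / \<sigma>) \<le> f u" for u
  proof -
    have "\<bar>u\<bar> / \<sigma> \<le> \<bar>h\<bar> / \<sigma> + \<bar>u - h\<bar> / \<sigma>"
      using \<sigma>_pos by (simp add: add_divide_distrib[symmetric] divide_right_mono)
    then have "\<phi> (u - h) * (1 + \<bar>u\<bar> / \<sigma>) \<le> \<phi> (u - h) * (1 + \<bar>h\<bar> / \<sigma> + \<bar>u - h\<bar> / \<sigma>)"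
      by (intro mult_left_mono) auto
    moreover have "\<bar>\<phi> (u - h) - \<phi> u\<bar> * (1 + \<bar>u\<bar> / \<sigma>) \<le> (\<phi> (u - h) + \<phi> u) * (1 + \<bar>u\<bar> / \<sigma>)"
      using \<sigma>_pos normal_density_nonneg[of 0 \<sigma> "u - h"] normal_density_nonneg[of 0 \<sigma> u]
      by (intro mult_right_mono) (auto simp: abs_le_iff)
    ultimately show ?thesis unfolding f_def by (simp add: field_simps)
  qed
  then show ?thesis
    unfolding gaussian_shift_defect_def f_integral[symmetric] by (intro nn_integral_mono ennreal_leI)
qed

lemma shift_diff_le_nn_integral_derivative:
  assumes "h \<ge> 0"
  shows "ennreal (\<bar>\<phi> (u - h) - \<phi> u\<bar> * (1 + \<bar>u\<bar> / \<sigma>))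
    \<le> (\<integral>\<^sup>+\<theta>. ennreal ((1 + \<bar>u\<bar> / \<sigma>) * (\<bar>u - \<theta>\<bar> / \<sigma>\<^sup>2 * \<phi> (u - \<theta>)) * indicator {0..h} \<theta>) \<partial>lborel)"
proof -
  define D where "D \<theta> = (- (u - \<theta>) / \<sigma>\<^sup>2 * \<phi> (u - \<theta>)) * (- 1)" for \<theta>
  have deriv: "((\<lambda>\<theta>. \<phi> (u - \<theta>)) has_real_derivative D \<theta>) (at \<theta>)" for \<theta>
    unfolding D_def
    by (rule DERIV_chain2[OF normal_density_has_real_derivative[OF \<sigma>_pos]])
      (auto intro!: derivative_eq_intros)
  have \<phi>_cont: "isCont \<phi> x" for x
    using continuous_on_normal_density[OF \<sigma>_pos] by (simp add: continuous_on_eq_continuous_at)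
  have "isCont (\<lambda>\<theta>. \<phi> (u - \<theta>)) \<theta>" for \<theta>
    by (rule isCont_o2[OF _ \<phi>_cont]) (intro continuous_intros)
  then have D_cont: "isCont D \<theta>" for \<theta>
    unfolding D_def using \<sigma>_pos by (intro continuous_intros) auto
  then have [measurable]: "D \<in> borel_measurable borel"
    by (intro borel_measurable_continuous_onI continuous_at_imp_continuous_on) auto
  from D_cont have FTC: "has_bochner_integral lborel (\<lambda>\<theta>. D \<theta> * indicator {0..h} \<theta>) (\<phi> (u - h) - \<phi> (u - 0))"
    using deriv by (intro has_bochner_integral_FTC_Icc_real[OF assms]) auto
  have "ennreal \<bar>\<phi> (u - h) - \<phi> u\<bar> = ennreal (norm (integral\<^sup>L lborel (\<lambda>\<theta>. D \<theta> * indicator {0..h} \<theta>)))"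
    using FTC by (simp add: has_bochner_integral_integral_eq)
  also have "\<dots> \<le> (\<integral>\<^sup>+\<theta>. norm (D \<theta> * indicator {0..h} \<theta>) \<partial>lborel)"
    using FTC by (intro integral_norm_bound_ennreal) (simp add: has_bochner_integral_iff)
  finally have "ennreal \<bar>\<phi> (u - h) - \<phi> u\<bar> * ennreal (1 + \<bar>u\<bar> / \<sigma>)
      \<le> (\<integral>\<^sup>+\<theta>. norm (D \<theta> * indicator {0..h} \<theta>) \<partial>lborel) * ennreal (1 + \<bar>u\<bar> / \<sigma>)"
    by (rule mult_right_mono) simp
  also have "\<dots> = (\<integral>\<^sup>+\<theta>. ennreal (norm (D \<theta> * indicator {0..h} \<theta>)) * ennreal (1 + \<bar>u\<bar> / \<sigma>) \<partial>lborel)"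
    by (rule nn_integral_multc[symmetric]) simp
  also have "\<dots> = (\<integral>\<^sup>+\<theta>. ennreal ((1 + \<bar>u\<bar> / \<sigma>) * (\<bar>u - \<theta>\<bar> / \<sigma>\<^sup>2 * \<phi> (u - \<theta>)) * indicator {0..h} \<theta>) \<partial>lborel)"
  proof (rule nn_integral_cong)
    fix \<theta> :: real
    have "norm (D \<theta> * indicator {0..h} \<theta>) * (1 + \<bar>u\<bar> / \<sigma>)
        = (1 + \<bar>u\<bar> / \<sigma>) * (\<bar>u - \<theta>\<bar> / \<sigma>\<^sup>2 * \<phi> (u - \<theta>)) * indicator {0..h} \<theta>"
      unfolding D_def by (simp add: abs_mult abs_minus_commute split: split_indicator)
    then show "ennreal (norm (D \<theta> * indicator {0..h} \<theta>)) * ennreal (1 + \<bar>u\<bar> / \<sigma>)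
        = ennreal ((1 + \<bar>u\<bar> / \<sigma>) * (\<bar>u - \<theta>\<bar> / \<sigma>\<^sup>2 * \<phi> (u - \<theta>)) * indicator {0..h} \<theta>)"
      using \<sigma>_pos by (subst ennreal_mult[symmetric]) auto
  qed
  finally show ?thesis
    using \<sigma>_pos by (simp add: ennreal_mult)
qed

lemma nn_integral_weighted_normal_derivative_le:
  assumes "\<theta> \<ge> 0"
  shows "(\<integral>\<^sup>+u. ennreal ((1 + \<bar>u\<bar> / \<sigma>) * (\<bar>u - \<theta>\<bar> / \<sigma>\<^sup>2 * \<phi> (u - \<theta>))) \<partial>lborel)
     \<le> ennreal ((1 + \<theta> / \<sigma>) * sqrt (2 / pi) / \<sigma> + 1 / \<sigma>)"
proof -
  define r where "r u = ((1 + \<theta> / \<sigma>) / \<sigma>\<^sup>2) * (\<phi> (u - \<theta>) * \<bar>u - \<theta>\<bar>) + (1 / \<sigma> ^ 3) * (\<phi> (u - \<theta>) * (u - \<theta>)\<^sup>2)" for u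
  have "has_bochner_integral lborel r (((1 + \<theta> / \<sigma>) / \<sigma>\<^sup>2) * (\<sigma> * sqrt (2 / pi)) + (1 / \<sigma> ^ 3) * \<sigma>\<^sup>2)"
    unfolding r_def
    by (intro has_bochner_integral_add has_bochner_integral_mult_right
        has_bochner_integral_lborel_shift[where g = "\<lambda>x. \<phi> x * \<bar>x\<bar>"]
        has_bochner_integral_lborel_shift[where g = "\<lambda>x. \<phi> x * x\<^sup>2"]
        has_bochner_integral_normal_abs_moment has_bochner_integral_normal_second_moment)
  moreover have "((1 + \<theta> / \<sigma>) / \<sigma>\<^sup>2) * (\<sigma> * sqrt (2 / pi)) + (1 / \<sigma> ^ 3) * \<sigma>\<^sup>2
      = (1 + \<theta> / \<sigma>) * sqrt (2 / pi) / \<sigma> + 1 / \<sigma>"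
    using \<sigma>_pos by (simp add: field_simps power2_eq_square power3_eq_cube)
  ultimately have "has_bochner_integral lborel r ((1 + \<theta> / \<sigma>) * sqrt (2 / pi) / \<sigma> + 1 / \<sigma>)"
    by simp
  moreover have "r u \<ge> 0" for u
    unfolding r_def using \<sigma>_pos assms by simp
  ultimately have r_integral: "(\<integral>\<^sup>+u. ennreal (r u) \<partial>lborel) = ennreal ((1 + \<theta> / \<sigma>) * sqrt (2 / pi) / \<sigma> + 1 / \<sigma>)"
    by (rule nn_integral_eq_has_bochner_integral)
  have "(1 + \<bar>u\<bar> / \<sigma>) * (\<bar>u - \<theta>\<bar> / \<sigma>\<^sup>2 * \<phi> (u - \<theta>)) \<le> r u" for u
  proof -
    have "\<bar>u\<bar> / \<sigma> \<le> \<theta> / \<sigma> + \<bar>u - \<theta>\<bar> / \<sigma>"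
      using \<sigma>_pos assms by (simp add: add_divide_distrib[symmetric] divide_right_mono)
    then have "(1 + \<bar>u\<bar> / \<sigma>) * (\<bar>u - \<theta>\<bar> / \<sigma>\<^sup>2 * \<phi> (u - \<theta>))
        \<le> (1 + \<theta> / \<sigma> + \<bar>u - \<theta>\<bar> / \<sigma>) * (\<bar>u - \<theta>\<bar> / \<sigma>\<^sup>2 * \<phi> (u - \<theta>))"
      by (intro mult_right_mono) auto
    also have "\<dots> = r u"
    proof -
      have "(1 + a + w / \<sigma>) * (w / \<sigma>\<^sup>2 * g) = ((1 + a) / \<sigma>\<^sup>2) * (g * w) + (1 / \<sigma> ^ 3) * (g * (w * w))"
        for a w g :: real
        using \<sigma>_pos by (simp add: field_simps power2_eq_square power3_eq_cube)
      from this[of "\<theta> / \<sigma>" "\<bar>u - \<theta>\<bar>" "\<phi> (u - \<theta>)"] show ?thesis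
        unfolding r_def power2_eq_square abs_mult_self_eq .
    qed
    finally show ?thesis .
  qed
  then show ?thesis
    unfolding r_integral[symmetric] by (intro nn_integral_mono ennreal_leI)
qed

lemma gaussian_shift_defect_le_small:
  assumes h: "h \<ge> 0"
  shows "gaussian_shift_defect \<sigma> h
     \<le> ennreal ((sqrt (2 / pi) / \<sigma> + 1 / \<sigma>) * h + sqrt (2 / pi) / (2 * \<sigma>\<^sup>2) * h\<^sup>2)"
proof -
  define E where "E u \<theta> = ennreal ((1 + \<bar>u\<bar> / \<sigma>) * (\<bar>u - \<theta>\<bar> / \<sigma>\<^sup>2 * \<phi> (u - \<theta>)) * indicator {0..h} \<theta>)" for u \<theta>
  define V where "V \<theta> = (1 + \<theta> / \<sigma>) * sqrt (2 / pi) / \<sigma> + 1 / \<sigma>" for \<theta>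
  define F where "F \<theta> = (sqrt (2 / pi) / \<sigma> + 1 / \<sigma>) * \<theta> + sqrt (2 / pi) / (2 * \<sigma>\<^sup>2) * \<theta>\<^sup>2" for \<theta>
  have "gaussian_shift_defect \<sigma> h \<le> (\<integral>\<^sup>+u. \<integral>\<^sup>+\<theta>. E u \<theta> \<partial>lborel \<partial>lborel)"
    unfolding gaussian_shift_defect_def E_def
    by (intro nn_integral_mono shift_diff_le_nn_integral_derivative[OF h])
  also have "\<dots> = (\<integral>\<^sup>+\<theta>. \<integral>\<^sup>+u. E u \<theta> \<partial>lborel \<partial>lborel)"
    by (rule lborel_pair.Fubini'[symmetric]) (unfold E_def, measurable)
  also have "\<dots> \<le> (\<integral>\<^sup>+\<theta>. ennreal (V \<theta> * indicator {0..h} \<theta>) \<partial>lborel)"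
    unfolding E_def V_def
    using nn_integral_weighted_normal_derivative_le
    by (intro nn_integral_mono) (simp split: split_indicator)
  also have "\<dots> = ennreal (F h - F 0)"
  proof (rule nn_integral_eq_has_bochner_integral)
    show "has_bochner_integral lborel (\<lambda>\<theta>. V \<theta> * indicator {0..h} \<theta>) (F h - F 0)"
    proof (rule has_bochner_integral_FTC_Icc_real[OF h])
      show "(F has_real_derivative V x) (at x)" for x
        unfolding F_def V_def using \<sigma>_pos
        by (auto intro!: derivative_eq_intros simp: field_simps power2_eq_square)
      show "isCont V x" for x
        unfolding V_def using \<sigma>_pos by (intro continuous_intros) auto
    qed
    show "0 \<le> V \<theta> * indicator {0..h} \<theta>" for \<theta>
      unfolding V_def using \<sigma>_pos by (simp split: split_indicator)
  qed
  finally show ?thesis by (simp add: F_def)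
qed

lemma gaussian_shift_defect_le_nonneg:
  assumes h: "h \<ge> 0"
  shows "gaussian_shift_defect \<sigma> h \<le> ennreal (pi * h / \<sigma>)"
proof -
  have c: "sqrt (2 / pi) \<le> 1"
    using pi_gt3 by simp
  show ?thesis
  proof (cases "h \<le> 2 * \<sigma>")
    case True
    have linear: "sqrt (2 / pi) * h / \<sigma> \<le> h / \<sigma>"
      using c h \<sigma>_pos by (simp add: divide_right_mono mult_left_le_one_le)
    have "sqrt (2 / pi) / (2 * \<sigma>\<^sup>2) * h\<^sup>2 = (sqrt (2 / pi) * h / \<sigma>) * (h / (2 * \<sigma>))"
      using \<sigma>_pos by (simp add: field_simps power2_eq_square)
    also have "\<dots> \<le> sqrt (2 / pi) * h / \<sigma>"
      using True h \<sigma>_pos by (intro mult_left_le) auto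
    finally have quadratic: "sqrt (2 / pi) / (2 * \<sigma>\<^sup>2) * h\<^sup>2 \<le> h / \<sigma>"
      using linear by linarith
    have "(sqrt (2 / pi) / \<sigma> + 1 / \<sigma>) * h = sqrt (2 / pi) * h / \<sigma> + h / \<sigma>"
      by (simp add: field_simps)
    then have "(sqrt (2 / pi) / \<sigma> + 1 / \<sigma>) * h + sqrt (2 / pi) / (2 * \<sigma>\<^sup>2) * h\<^sup>2 \<le> 3 * (h / \<sigma>)"
      using linear quadratic by linarith
    also have "\<dots> \<le> pi * (h / \<sigma>)"
      using pi_gt3 h \<sigma>_pos by (intro mult_right_mono) auto
    also have "\<dots> = pi * h / \<sigma>" by simp
    finally show ?thesis
      using order_trans[OF gaussian_shift_defect_le_small[OF h] ennreal_leI] by simp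
  next
    case False
    then have "2 \<le> h / \<sigma>"
      using \<sigma>_pos by (simp add: field_simps)
    moreover have "3 * (h / \<sigma>) \<le> pi * (h / \<sigma>)"
      using pi_gt3 h \<sigma>_pos by (intro mult_right_mono) auto
    moreover have "\<bar>h\<bar> / \<sigma> = h / \<sigma>"
      using h by simp
    ultimately have "2 + 2 * sqrt (2 / pi) + \<bar>h\<bar> / \<sigma> \<le> pi * (h / \<sigma>)"
      using c by linarith
    then show ?thesis
      using order_trans[OF gaussian_shift_defect_le_large ennreal_leI] by simp
  qed
qed

lemma gaussian_shift_defect_minus: "gaussian_shift_defect \<sigma> (- h) = gaussian_shift_defect \<sigma> h"
proof -
  have "gaussian_shift_defect \<sigma> h
      = (\<integral>\<^sup>+u. ennreal (\<bar>\<phi> (0 + - 1 * u - h) - \<phi> (0 + - 1 * u)\<bar> * (1 + \<bar>0 + - 1 * u\<bar> / \<sigma>)) \<partial>lborel)"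
    unfolding gaussian_shift_defect_def
    using nn_integral_real_affine[of "\<lambda>u. ennreal (\<bar>\<phi> (u - h) - \<phi> u\<bar> * (1 + \<bar>u\<bar> / \<sigma>))" "- 1" 0]
    by simp
  also have "\<dots> = gaussian_shift_defect \<sigma> (- h)"
    unfolding gaussian_shift_defect_def
    using normal_density_minus[of \<sigma> "u + h" for u] normal_density_minus[of \<sigma>]
    by (intro nn_integral_cong) (simp add: add.commute)
  finally show ?thesis ..
qed

lemma gaussian_shift_defect_le: "gaussian_shift_defect \<sigma> h \<le> ennreal (pi * \<bar>h\<bar> / \<sigma>)"
  using gaussian_shift_defect_le_nonneg[of h] gaussian_shift_defect_le_nonneg[of "- h"]
  by (cases "h \<ge> 0") (simp_all add: gaussian_shift_defect_minus)

end

section \<open>Lebesgue measure on the real 3-space\<close>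

lemma measurable_fst_borel [measurable]:
  "fst \<in> measurable (borel :: ('a::topological_space \<times> 'b::topological_space) measure) borel"
  by (intro borel_measurable_continuous_onI continuous_intros)

lemma measurable_snd_borel [measurable]:
  "snd \<in> measurable (borel :: ('a::topological_space \<times> 'b::topological_space) measure) borel"
  by (intro borel_measurable_continuous_onI continuous_intros)

lemma sets_lborel_triple:
  "sets (lborel \<Otimes>\<^sub>M (lborel \<Otimes>\<^sub>M lborel)) = sets (borel :: (real \<times> real \<times> real) measure)"
  by (metis lborel_prod sets_lborel)

lemma measurable_lborel_triple:
  "(g :: real \<times> real \<times> real \<Rightarrow> 'b::topological_space) \<in> borel_measurable borel \<Longrightarrow>
    g \<in> borel_measurable (lborel \<Otimes>\<^sub>M (lborel \<Otimes>\<^sub>M lborel))"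
  using measurable_cong_sets[OF sets_lborel_triple refl] by blast

lemma nn_integral_lborel_triple:
  fixes g :: "real \<times> real \<times> real \<Rightarrow> ennreal"
  assumes g: "g \<in> borel_measurable borel"
  shows "(\<integral>\<^sup>+x. g x \<partial>lborel) = (\<integral>\<^sup>+s. \<integral>\<^sup>+t. \<integral>\<^sup>+u. g (s, u, t) \<partial>lborel \<partial>lborel \<partial>lborel)"
proof -
  have [measurable]: "g \<in> borel_measurable (lborel \<Otimes>\<^sub>M (lborel \<Otimes>\<^sub>M lborel))"
    using measurable_lborel_triple[OF g] .
  have "g \<in> borel_measurable (lborel \<Otimes>\<^sub>M (lborel :: (real \<times> real) measure))"
    using g measurable_cong_sets[of "lborel \<Otimes>\<^sub>M (lborel :: (real \<times> real) measure)" borel]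
    by (simp add: lborel_prod)
  then have "(\<integral>\<^sup>+x. g x \<partial>lborel) = (\<integral>\<^sup>+s. \<integral>\<^sup>+p. g (s, p) \<partial>lborel \<partial>lborel)"
    unfolding lborel_prod[symmetric, where 'a = real and 'b = "real \<times> real"]
    by (rule lborel.nn_integral_fst[symmetric])
  also have "\<dots> = (\<integral>\<^sup>+s. \<integral>\<^sup>+t. \<integral>\<^sup>+u. g (s, u, t) \<partial>lborel \<partial>lborel \<partial>lborel)"
  proof (rule nn_integral_cong)
    fix s :: real
    have [measurable]: "(\<lambda>p. g (s, p)) \<in> borel_measurable (lborel \<Otimes>\<^sub>M lborel)" by measurable
    have "(\<integral>\<^sup>+p. g (s, p) \<partial>lborel) = (\<integral>\<^sup>+p. g (s, p) \<partial>(lborel \<Otimes>\<^sub>M lborel))"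
      by (simp only: lborel_prod)
    then show "(\<integral>\<^sup>+p. g (s, p) \<partial>lborel) = (\<integral>\<^sup>+t. \<integral>\<^sup>+u. g (s, u, t) \<partial>lborel \<partial>lborel)"
      using lborel_pair.nn_integral_snd[of "\<lambda>p. g (s, p)"] by simp
  qed
  finally show ?thesis .
qed

lemma distr_eq_of_nn_integral_comp_eq:
  assumes T: "T \<in> measurable M M"
    and preserves: "\<And>g. g \<in> borel_measurable M \<Longrightarrow> (\<integral>\<^sup>+x. g (T x) \<partial>M) = (\<integral>\<^sup>+x. g x \<partial>M)"
  shows "distr M M T = M"
proof (rule measure_eqI)
  fix A assume "A \<in> sets (distr M M T)"
  then have A: "A \<in> sets M" by simp
  have TA: "T -` A \<inter> space M \<in> sets M" using measurable_sets[OF T A] .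
  have "emeasure (distr M M T) A = emeasure M (T -` A \<inter> space M)"
    by (rule emeasure_distr[OF T A])
  also have "\<dots> = (\<integral>\<^sup>+x. indicator A (T x) \<partial>M)"
    using TA by (simp add: nn_integral_indicator[symmetric] indicator_inter_arith
        del: nn_integral_indicator) (rule nn_integral_cong, simp split: split_indicator)
  also have "\<dots> = emeasure M A"
    using A by (simp add: preserves)
  finally show "emeasure (distr M M T) A = emeasure M A" .
qed simp

text \<open>X(s) Z(u) Y(t) and Y(t) Z(u) X(s) differ by this shear of the central coordinate.\<close>
definition shear3 :: "real \<times> real \<times> real \<Rightarrow> real \<times> real \<times> real" where
  "shear3 = (\<lambda>(s, u, t). (s, u + s * t, t))"

definition swap13 :: "real \<times> real \<times> real \<Rightarrow> real \<times> real \<times> real" where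
  "swap13 = (\<lambda>(t, u, s). (s, u, t))"

lemma shear3_apply: "shear3 (s, u, t) = (s, u + s * t, t)"
  by (simp add: shear3_def)

lemma swap13_apply: "swap13 (t, u, s) = (s, u, t)"
  by (simp add: swap13_def)

lemma measurable_shear3 [measurable]: "shear3 \<in> borel_measurable borel"
  unfolding shear3_def case_prod_beta by (intro borel_measurable_continuous_onI continuous_intros)

lemma measurable_swap13 [measurable]: "swap13 \<in> borel_measurable borel"
  unfolding swap13_def case_prod_beta by (intro borel_measurable_continuous_onI continuous_intros)

lemma distr_lborel_shear3: "distr lborel lborel shear3 = lborel"
proof (rule distr_eq_of_nn_integral_comp_eq)
  fix g :: "real \<times> real \<times> real \<Rightarrow> ennreal"
  assume [measurable]: "g \<in> borel_measurable lborel"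
  have "(\<integral>\<^sup>+u. g (s, u + s * t, t) \<partial>lborel) = (\<integral>\<^sup>+u. g (s, u, t) \<partial>lborel)" for s t
    using nn_integral_real_affine[of "\<lambda>u. g (s, u, t)" 1 "s * t"] by (simp add: add.commute)
  then show "(\<integral>\<^sup>+x. g (shear3 x) \<partial>lborel) = (\<integral>\<^sup>+x. g x \<partial>lborel)"
    by (simp add: nn_integral_lborel_triple shear3_apply)
qed simp

lemma distr_lborel_swap13: "distr lborel lborel swap13 = lborel"
proof (rule distr_eq_of_nn_integral_comp_eq)
  fix g :: "real \<times> real \<times> real \<Rightarrow> ennreal"
  assume g [measurable]: "g \<in> borel_measurable lborel"
  have [measurable]: "g \<in> borel_measurable (lborel \<Otimes>\<^sub>M (lborel \<Otimes>\<^sub>M lborel))"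
    by (rule measurable_lborel_triple) (use g in simp)
  have "(\<integral>\<^sup>+t. \<integral>\<^sup>+s. \<integral>\<^sup>+u. g (s, u, t) \<partial>lborel \<partial>lborel \<partial>lborel)
      = (\<integral>\<^sup>+s. \<integral>\<^sup>+t. \<integral>\<^sup>+u. g (s, u, t) \<partial>lborel \<partial>lborel \<partial>lborel)"
    by (rule lborel_pair.Fubini[of "\<lambda>(s, t). \<integral>\<^sup>+u. g (s, u, t) \<partial>lborel", simplified]) measurable
  then show "(\<integral>\<^sup>+x. g (swap13 x) \<partial>lborel) = (\<integral>\<^sup>+x. g x \<partial>lborel)"
    by (simp add: nn_integral_lborel_triple swap13_apply)
qed simp

lemma
  fixes f :: "real \<times> real \<times> real \<Rightarrow> real"
  assumes [measurable]: "f \<in> borel_measurable borel"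
  shows integrable_lborel_shear3_iff: "integrable lborel (\<lambda>x. f (shear3 x)) \<longleftrightarrow> integrable lborel f"
    and integral_lborel_shear3: "(\<integral>x. f (shear3 x) \<partial>lborel) = (\<integral>x. f x \<partial>lborel)"
    and integrable_lborel_swap13_iff: "integrable lborel (\<lambda>x. f (swap13 x)) \<longleftrightarrow> integrable lborel f"
    and integral_lborel_swap13: "(\<integral>x. f (swap13 x) \<partial>lborel) = (\<integral>x. f x \<partial>lborel)"
  using integrable_distr_eq[of shear3 lborel lborel f] integral_distr[of shear3 lborel lborel f]
    integrable_distr_eq[of swap13 lborel lborel f] integral_distr[of swap13 lborel lborel f]
  by (simp_all add: distr_lborel_shear3 distr_lborel_swap13)

lemma nn_integral_lborel_triple_product:
  fixes f g h :: "real \<Rightarrow> real"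
  assumes [measurable]: "f \<in> borel_measurable borel" "g \<in> borel_measurable borel" "h \<in> borel_measurable borel"
    and "\<And>x. f x \<ge> 0" "\<And>x. g x \<ge> 0" "\<And>x. h x \<ge> 0"
  shows "(\<integral>\<^sup>+x. ennreal (f (fst x) * g (fst (snd x)) * h (snd (snd x))) \<partial>lborel)
     = (\<integral>\<^sup>+s. f s \<partial>lborel) * (\<integral>\<^sup>+u. g u \<partial>lborel) * (\<integral>\<^sup>+t. h t \<partial>lborel)"
proof -
  have "(\<integral>\<^sup>+s. \<integral>\<^sup>+t. \<integral>\<^sup>+u. ennreal (f s * g u * h t) \<partial>lborel \<partial>lborel \<partial>lborel)
      = (\<integral>\<^sup>+s. \<integral>\<^sup>+t. ennreal (f s) * ennreal (h t) * (\<integral>\<^sup>+u. g u \<partial>lborel) \<partial>lborel \<partial>lborel)"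
    using assms(4-6) by (simp add: ennreal_mult' nn_integral_cmult mult_ac nn_integral_multc)
  also have "\<dots> = (\<integral>\<^sup>+s. f s \<partial>lborel) * (\<integral>\<^sup>+u. g u \<partial>lborel) * (\<integral>\<^sup>+t. h t \<partial>lborel)"
    by (simp add: nn_integral_cmult nn_integral_multc mult_ac)
  finally show ?thesis
    by (subst nn_integral_lborel_triple) auto
qed

section \<open>Gaussian-weighted integrals\<close>

lemma continuous_on_gdens [continuous_intros]:
  "continuous_on S f \<Longrightarrow> continuous_on S (\<lambda>x. gdens a (f x))"
  unfolding gdens_def using continuous_on_compose2[OF continuous_on_normal_density[of "exp a"]] by simp

lemma gdens_nonneg [simp]: "0 \<le> gdens a x"
  unfolding gdens_def by simp

lemma measurable_gdens [measurable]: "gdens a \<in> borel_measurable borel"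
  unfolding gdens_def[abs_def] by simp

lemma nn_integral_gdens_abs: "(\<integral>\<^sup>+x. ennreal (gdens a x * \<bar>x\<bar>) \<partial>lborel) = ennreal (exp a * sqrt (2 / pi))"
  unfolding gdens_def
  by (intro nn_integral_eq_has_bochner_integral has_bochner_integral_normal_abs_moment[of "exp a"]) simp_all

lemma nn_integral_gdens_moment: "(\<integral>\<^sup>+x. ennreal (gdens a x * (1 + \<bar>x\<bar>)) \<partial>lborel) = ennreal (1 + exp a * sqrt (2 / pi))"
proof -
  have "has_bochner_integral lborel (\<lambda>x. gdens a x + gdens a x * \<bar>x\<bar>) (1 + exp a * sqrt (2 / pi))"
    unfolding gdens_def
    by (intro has_bochner_integral_add has_bochner_integral_normal_density[of "exp a"]
        has_bochner_integral_normal_abs_moment[of "exp a"]) simp_all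
  then have "(\<integral>\<^sup>+x. ennreal (gdens a x + gdens a x * \<bar>x\<bar>) \<partial>lborel) = ennreal (1 + exp a * sqrt (2 / pi))"
    by (rule nn_integral_eq_has_bochner_integral) simp
  then show ?thesis
    by (simp add: algebra_simps)
qed

lemma integrable_gaussian_moment_weight:
  "integrable lborel (\<lambda>(s, u, t). gdens a s * (1 + \<bar>s\<bar>) * (gdens b u * (1 + \<bar>u\<bar>)) * (gdens c t * (1 + \<bar>t\<bar>)))"
  unfolding case_prod_beta
proof (rule integrableI_nonneg)
  have "(\<integral>\<^sup>+x. ennreal (gdens a (fst x) * (1 + \<bar>fst x\<bar>) * (gdens b (fst (snd x)) * (1 + \<bar>fst (snd x)\<bar>))
      * (gdens c (snd (snd x)) * (1 + \<bar>snd (snd x)\<bar>))) \<partial>lborel)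
     = (\<integral>\<^sup>+s. gdens a s * (1 + \<bar>s\<bar>) \<partial>lborel) * (\<integral>\<^sup>+u. gdens b u * (1 + \<bar>u\<bar>) \<partial>lborel)
       * (\<integral>\<^sup>+t. gdens c t * (1 + \<bar>t\<bar>) \<partial>lborel)"
    by (rule nn_integral_lborel_triple_product) auto
  also have "\<dots> < \<infinity>"
    unfolding nn_integral_gdens_moment by (simp add: ennreal_mult_less_top)
  finally show "(\<integral>\<^sup>+x. ennreal (gdens a (fst x) * (1 + \<bar>fst x\<bar>) * (gdens b (fst (snd x)) * (1 + \<bar>fst (snd x)\<bar>))
      * (gdens c (snd (snd x)) * (1 + \<bar>snd (snd x)\<bar>))) \<partial>lborel) < \<infinity>" .
qed auto

lemma integrable_on_dominated_continuous:
  fixes f :: "'a::euclidean_space \<Rightarrow> 'e::banach"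
  assumes "continuous_on UNIV f" "integrable lborel W" "\<And>x. norm (f x) \<le> W x"
  shows "f integrable_on UNIV"
proof (rule integrable_on_all_intervals_UNIV[where g = W])
  show "f integrable_on cbox a b" for a b
    by (rule integrable_continuous) (rule continuous_on_subset[OF assms(1)], simp)
  show "W integrable_on UNIV"
    using has_integral_integral_lborel[OF assms(2)] by blast
qed (rule assms(3))

lemma integrable_dominated_continuous:
  fixes f :: "'a::euclidean_space \<Rightarrow> real"
  assumes "continuous_on UNIV f" "integrable lborel W" "\<And>x. \<bar>f x\<bar> \<le> W x"
  shows "integrable lborel f"
proof (rule Bochner_Integration.integrable_bound[OF assms(2)])
  show "f \<in> borel_measurable lborel"
    using borel_measurable_continuous_onI[OF assms(1)] by simp
  show "AE x in lborel. norm (f x) \<le> norm (W x)"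
    using assms(3) by (auto intro!: AE_I2 order_trans[OF _ abs_ge_self])
qed

lemma integrable_gaussian_dominated:
  fixes f :: "real \<times> real \<times> real \<Rightarrow> real"
  assumes "continuous_on UNIV f"
    and "\<And>s u t. \<bar>f (s, u, t)\<bar> \<le> gdens a s * gdens b u * gdens c t * (C * ((1 + \<bar>s\<bar>) * (1 + \<bar>u\<bar>) * (1 + \<bar>t\<bar>)))"
  shows "integrable lborel f"
proof (rule integrable_dominated_continuous[OF assms(1) integrable_mult_right[OF integrable_gaussian_moment_weight]])
  fix x :: "real \<times> real \<times> real"
  obtain s u t where x: "x = (s, u, t)" using prod_cases3 by blast
  show "\<bar>f x\<bar> \<le> C * (case x of (s, u, t) \<Rightarrow> gdens a s * (1 + \<bar>s\<bar>) * (gdens b u * (1 + \<bar>u\<bar>)) * (gdens c t * (1 + \<bar>t\<bar>)))"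
    using assms(2)[of s u t] by (simp add: x mult_ac)
qed

lemma integrable_on_gaussian_dominated:
  fixes f :: "real \<times> real \<times> real \<Rightarrow> 'e::banach"
  assumes "continuous_on UNIV f"
    and "\<And>s u t. norm (f (s, u, t)) \<le> gdens a s * gdens b u * gdens c t * (C * ((1 + \<bar>s\<bar>) * (1 + \<bar>u\<bar>) * (1 + \<bar>t\<bar>)))"
  shows "f integrable_on UNIV"
proof (rule integrable_on_dominated_continuous[OF assms(1) integrable_mult_right[OF integrable_gaussian_moment_weight]])
  fix x :: "real \<times> real \<times> real"
  obtain s u t where x: "x = (s, u, t)" using prod_cases3 by blast
  show "norm (f x) \<le> C * (case x of (s, u, t) \<Rightarrow> gdens a s * (1 + \<bar>s\<bar>) * (gdens b u * (1 + \<bar>u\<bar>)) * (gdens c t * (1 + \<bar>t\<bar>)))"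
    using assms(2)[of s u t] by (simp add: x mult_ac)
qed

lemma bounded_linear_integral_gaussian:
  fixes f :: "real \<times> real \<times> real \<Rightarrow> 'e::banach"
  assumes l: "bounded_linear l" and f: "continuous_on UNIV f"
    and growth: "\<And>s u t. norm (f (s, u, t)) \<le> C * ((1 + \<bar>s\<bar>) * (1 + \<bar>u\<bar>) * (1 + \<bar>t\<bar>))"
  shows "l (integral UNIV (\<lambda>(s, u, t). (gdens a s * gdens b u * gdens c t) *\<^sub>R f (s, u, t)))
       = (\<integral>(s, u, t). gdens a s * gdens b u * gdens c t * l (f (s, u, t)) \<partial>lborel)"
proof -
  obtain K where K_nonneg: "K \<ge> 0" and K: "\<And>x. norm (l x) \<le> norm x * K"
    using bounded_linear.nonneg_bounded[OF l] by blast
  define g where "g = (\<lambda>(s, u, t). (gdens a s * gdens b u * gdens c t) *\<^sub>R f (s, u, t))"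
  have g_cont: "continuous_on UNIV g"
    unfolding g_def case_prod_beta by (intro continuous_intros continuous_on_compose2[OF f]) auto
  have g_integrable: "g integrable_on UNIV"
  proof (rule integrable_on_gaussian_dominated[OF g_cont])
    show "norm (g (s, u, t)) \<le> gdens a s * gdens b u * gdens c t * (C * ((1 + \<bar>s\<bar>) * (1 + \<bar>u\<bar>) * (1 + \<bar>t\<bar>)))" for s u t
      unfolding g_def using growth by (simp add: mult_left_mono)
  qed
  have l_integrable: "integrable lborel (\<lambda>(s, u, t). gdens a s * gdens b u * gdens c t * l (f (s, u, t)))"
  proof (rule integrable_gaussian_dominated[where C = "K * C"])
    show "continuous_on UNIV (\<lambda>(s, u, t). gdens a s * gdens b u * gdens c t * l (f (s, u, t)))"
      unfolding case_prod_beta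
      by (intro continuous_intros continuous_on_compose2[OF linear_continuous_on[OF l]]
          continuous_on_compose2[OF f]) auto
    show "\<bar>(\<lambda>(s, u, t). gdens a s * gdens b u * gdens c t * l (f (s, u, t))) (s, u, t)\<bar>
        \<le> gdens a s * gdens b u * gdens c t * (K * C * ((1 + \<bar>s\<bar>) * (1 + \<bar>u\<bar>) * (1 + \<bar>t\<bar>)))" for s u t
    proof -
      have "\<bar>l (f (s, u, t))\<bar> \<le> K * norm (f (s, u, t))"
        using K[of "f (s, u, t)"] by (simp add: mult.commute)
      also have "\<dots> \<le> K * (C * ((1 + \<bar>s\<bar>) * (1 + \<bar>u\<bar>) * (1 + \<bar>t\<bar>)))"
        using growth K_nonneg by (rule mult_left_mono)
      finally have "\<bar>l (f (s, u, t))\<bar> \<le> K * C * ((1 + \<bar>s\<bar>) * (1 + \<bar>u\<bar>) * (1 + \<bar>t\<bar>))"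
        by (simp add: mult.assoc)
      then show ?thesis
        by (simp add: abs_mult mult_left_mono)
    qed
  qed
  have "l (integral UNIV g) = integral UNIV (l \<circ> g)"
    by (rule integral_linear[OF g_integrable l, symmetric])
  also have "l \<circ> g = (\<lambda>(s, u, t). gdens a s * gdens b u * gdens c t * l (f (s, u, t)))"
    unfolding g_def by (auto simp: linear_cmul[OF bounded_linear.linear[OF l]])
  also have "integral UNIV \<dots> = (\<integral>(s, u, t). gdens a s * gdens b u * gdens c t * l (f (s, u, t)) \<partial>lborel)"
    by (rule integral_lborel[OF l_integrable])
  finally show ?thesis unfolding g_def .
qed

lemma nn_integral_commutator_kernel_le:
  "(\<integral>\<^sup>+(s, u, t). ennreal (gdens a s * gdens c t * \<bar>gdens b (u - s * t) - gdens b u\<bar> * (1 + \<bar>u\<bar> / exp b)) \<partial>lborel)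
     \<le> ennreal (2 * exp (a + c - b))"
proof -
  have inner: "(\<integral>\<^sup>+u. ennreal (gdens a s * gdens c t * \<bar>gdens b (u - s * t) - gdens b u\<bar> * (1 + \<bar>u\<bar> / exp b)) \<partial>lborel)
      \<le> ennreal (pi / exp b) * ennreal (gdens a s * \<bar>s\<bar>) * ennreal (gdens c t * \<bar>t\<bar>)" for s t
  proof -
    have "(\<integral>\<^sup>+u. ennreal (gdens a s * gdens c t * \<bar>gdens b (u - s * t) - gdens b u\<bar> * (1 + \<bar>u\<bar> / exp b)) \<partial>lborel)
        = ennreal (gdens a s * gdens c t) * gaussian_shift_defect (exp b) (s * t)"
      unfolding gaussian_shift_defect_def gdens_def
      by (subst nn_integral_cmult[symmetric]) (auto simp: ennreal_mult' mult.assoc intro!: nn_integral_cong)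
    also have "\<dots> \<le> ennreal (gdens a s * gdens c t) * ennreal (pi * \<bar>s * t\<bar> / exp b)"
      by (intro mult_left_mono gaussian_shift_defect_le) auto
    also have "\<dots> = ennreal (pi / exp b) * ennreal (gdens a s * \<bar>s\<bar>) * ennreal (gdens c t * \<bar>t\<bar>)"
      by (simp add: ennreal_mult[symmetric] abs_mult mult_ac)
    finally show ?thesis .
  qed
  have "(\<integral>\<^sup>+(s, u, t). ennreal (gdens a s * gdens c t * \<bar>gdens b (u - s * t) - gdens b u\<bar> * (1 + \<bar>u\<bar> / exp b)) \<partial>lborel)
      \<le> (\<integral>\<^sup>+s. \<integral>\<^sup>+t. ennreal (pi / exp b) * ennreal (gdens a s * \<bar>s\<bar>) * ennreal (gdens c t * \<bar>t\<bar>) \<partial>lborel \<partial>lborel)"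
    by (subst nn_integral_lborel_triple) (auto intro!: nn_integral_mono inner)
  also have "\<dots> = ennreal (pi / exp b) * ennreal (exp a * sqrt (2 / pi)) * ennreal (exp c * sqrt (2 / pi))"
    by (simp add: nn_integral_cmult nn_integral_multc nn_integral_gdens_abs)
  also have "\<dots> = ennreal (2 * exp (a + c - b))"
  proof -
    have "sqrt (2 / pi) * sqrt (2 / pi) = 2 / pi"
      by (simp add: real_sqrt_mult_self)
    then have "pi / exp b * (exp a * sqrt (2 / pi)) * (exp c * sqrt (2 / pi)) = 2 * exp (a + c - b)"
      by (simp add: field_simps exp_add exp_diff)
    then show ?thesis by (simp add: ennreal_mult[symmetric])
  qed
  finally show ?thesis .
qed

section \<open>The commutator estimate\<close>

lemma linear_growth_le_product:
  fixes s u t w :: real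
  assumes "\<bar>w\<bar> \<le> \<bar>u\<bar> + \<bar>s\<bar> * \<bar>t\<bar>"
  shows "1 + \<bar>s\<bar> + \<bar>t\<bar> + \<bar>w\<bar> \<le> (1 + \<bar>s\<bar>) * (1 + \<bar>u\<bar>) * (1 + \<bar>t\<bar>)"
proof -
  have "(1 + \<bar>s\<bar>) * (1 + \<bar>u\<bar>) * (1 + \<bar>t\<bar>)
      = 1 + \<bar>s\<bar> + \<bar>t\<bar> + (\<bar>u\<bar> + \<bar>s\<bar> * \<bar>t\<bar>) + (\<bar>s\<bar> * \<bar>u\<bar> + \<bar>u\<bar> * \<bar>t\<bar> + \<bar>s\<bar> * \<bar>u\<bar> * \<bar>t\<bar>)"
    by (simp add: algebra_simps)
  moreover have "0 \<le> \<bar>s\<bar> * \<bar>u\<bar> + \<bar>u\<bar> * \<bar>t\<bar> + \<bar>s\<bar> * \<bar>u\<bar> * \<bar>t\<bar>"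
    by simp
  ultimately show ?thesis using assms by linarith
qed

lemma integrable_gaussian_linear_growth:
  fixes \<Phi> :: "heis \<Rightarrow> real" and h :: "real \<Rightarrow> real \<Rightarrow> real \<Rightarrow> real"
  assumes cont: "continuous_on UNIV \<Phi>"
    and growth: "\<And>x y z. \<bar>\<Phi> (x, y, z)\<bar> \<le> K * (1 + \<bar>x\<bar> + \<bar>y\<bar> + \<bar>z\<bar>)"
    and h_cont: "continuous_on UNIV (\<lambda>(s, u, t). h s u t)"
    and h_bound: "\<And>s u t. \<bar>h s u t\<bar> \<le> \<bar>u\<bar> + \<bar>s\<bar> * \<bar>t\<bar>"
  shows "integrable lborel (\<lambda>(s, u, t). gdens a s * gdens b u * gdens c t * \<Phi> (s, t, h s u t))"
proof (rule integrable_gaussian_dominated[where C = K])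
  show "continuous_on UNIV (\<lambda>(s, u, t). gdens a s * gdens b u * gdens c t * \<Phi> (s, t, h s u t))"
    using h_cont unfolding case_prod_beta
    by (intro continuous_intros continuous_on_compose2[OF cont]) auto
  show "\<bar>(\<lambda>(s, u, t). gdens a s * gdens b u * gdens c t * \<Phi> (s, t, h s u t)) (s, u, t)\<bar>
      \<le> gdens a s * gdens b u * gdens c t * (K * ((1 + \<bar>s\<bar>) * (1 + \<bar>u\<bar>) * (1 + \<bar>t\<bar>)))" for s u t
  proof -
    have "K \<ge> 0"
      using order_trans[OF abs_ge_zero growth[of 0 0 0]] by simp
    then have "\<bar>\<Phi> (s, t, h s u t)\<bar> \<le> K * ((1 + \<bar>s\<bar>) * (1 + \<bar>u\<bar>) * (1 + \<bar>t\<bar>))"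
      using growth linear_growth_le_product[OF h_bound] by (meson mult_left_mono order_trans)
    then show ?thesis
      by (simp add: abs_mult mult_left_mono)
  qed
qed

text \<open>Substituting u - s t for u turns the first integral into one against Y(t) Z(u) X(s);
  the same substitution applied to the term with Phi(s, t, 0) shows that subtracting it
  changes nothing, which leaves the central displacement Phi(s, t, u) - Phi(s, t, 0).\<close>
lemma gaussian_commutator_eq_integral:
  fixes \<Phi> :: "heis \<Rightarrow> real"
  assumes cont: "continuous_on UNIV \<Phi>"
    and growth: "\<And>x y z. \<bar>\<Phi> (x, y, z)\<bar> \<le> K * (1 + \<bar>x\<bar> + \<bar>y\<bar> + \<bar>z\<bar>)"
  shows "(\<integral>(s, u, t). gdens a s * gdens b u * gdens c t * \<Phi> (hmul (hmul (Xg s) (Zg u)) (Yg t)) \<partial>lborel)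
       - (\<integral>(t, u, s). gdens c t * gdens b u * gdens a s * \<Phi> (hmul (hmul (Yg t) (Zg u)) (Xg s)) \<partial>lborel)
     = (\<integral>(s, u, t). gdens a s * gdens c t * (gdens b (u - s * t) - gdens b u) * (\<Phi> (s, t, u) - \<Phi> (s, t, 0)) \<partial>lborel)"
proof -
  define G1 where "G1 = (\<lambda>(s, u, t). gdens a s * gdens b (u - s * t) * gdens c t * \<Phi> (s, t, u))"
  define G2 where "G2 = (\<lambda>(s, u, t). gdens a s * gdens b u * gdens c t * \<Phi> (s, t, u))"
  define K1 where "K1 = (\<lambda>(s, u, t). gdens a s * gdens b (u - s * t) * gdens c t * \<Phi> (s, t, 0))"
  define K0 where "K0 = (\<lambda>(s, u, t). gdens a s * gdens b u * gdens c t * \<Phi> (s, t, 0))"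
  have [measurable]: "G1 \<in> borel_measurable borel" "G2 \<in> borel_measurable borel" "K1 \<in> borel_measurable borel"
    unfolding G1_def G2_def K1_def case_prod_beta
    by (intro borel_measurable_continuous_onI continuous_intros continuous_on_compose2[OF cont]; simp)+
  have XZY: "(\<lambda>(s, u, t). gdens a s * gdens b u * gdens c t * \<Phi> (hmul (hmul (Xg s) (Zg u)) (Yg t)))
      = (\<lambda>x. G1 (shear3 x))"
    by (simp add: fun_eq_iff G1_def shear3_apply hmul_XZY)
  have YZX: "(\<lambda>(t, u, s). gdens c t * gdens b u * gdens a s * \<Phi> (hmul (hmul (Yg t) (Zg u)) (Xg s)))
      = (\<lambda>x. G2 (swap13 x))"
    by (simp add: fun_eq_iff G2_def swap13_apply hmul_YZX mult_ac)
  have K0K1: "K0 = (\<lambda>x. K1 (shear3 x))"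
    by (simp add: fun_eq_iff K0_def K1_def shear3_apply)
  have "integrable lborel (\<lambda>(s, u, t). gdens a s * gdens b u * gdens c t * \<Phi> (s, t, u + s * t))"
    by (rule integrable_gaussian_linear_growth[OF cont growth])
      (auto simp: case_prod_beta intro!: continuous_intros, metis abs_mult abs_triangle_ineq)
  moreover have "(\<lambda>(s, u, t). gdens a s * gdens b u * gdens c t * \<Phi> (s, t, u + s * t)) = (\<lambda>x. G1 (shear3 x))"
    by (simp add: fun_eq_iff G1_def shear3_apply)
  ultimately have G1_int: "integrable lborel G1"
    by (simp add: integrable_lborel_shear3_iff)
  have G2_int: "integrable lborel G2"
    unfolding G2_def
    by (rule integrable_gaussian_linear_growth[OF cont growth]) (auto simp: case_prod_beta intro!: continuous_intros)
  have K0_int: "integrable lborel K0"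
    unfolding K0_def by (rule integrable_gaussian_linear_growth[OF cont growth]) auto
  then have K1_int: "integrable lborel K1"
    by (simp add: K0K1 integrable_lborel_shear3_iff)
  have "(\<integral>(s, u, t). gdens a s * gdens b u * gdens c t * \<Phi> (hmul (hmul (Xg s) (Zg u)) (Yg t)) \<partial>lborel)
       - (\<integral>(t, u, s). gdens c t * gdens b u * gdens a s * \<Phi> (hmul (hmul (Yg t) (Zg u)) (Xg s)) \<partial>lborel)
     = integral\<^sup>L lborel G1 - integral\<^sup>L lborel G2 - (integral\<^sup>L lborel K1 - integral\<^sup>L lborel K0)"
    unfolding XZY YZX K0K1 by (simp add: integral_lborel_shear3 integral_lborel_swap13)
  also have "\<dots> = (\<integral>x. G1 x - G2 x - (K1 x - K0 x) \<partial>lborel)"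
    using G1_int G2_int K1_int K0_int by simp
  also have "\<dots> = (\<integral>(s, u, t). gdens a s * gdens c t * (gdens b (u - s * t) - gdens b u) * (\<Phi> (s, t, u) - \<Phi> (s, t, 0)) \<partial>lborel)"
    unfolding G1_def G2_def K1_def K0_def
    by (intro arg_cong[where f = "integral\<^sup>L lborel"]) (simp add: fun_eq_iff algebra_simps)
  finally show ?thesis .
qed

lemma gaussian_commutator_estimate:
  fixes \<Phi> :: "heis \<Rightarrow> real"
  assumes cont: "continuous_on UNIV \<Phi>"
    and growth: "\<And>x y z. \<bar>\<Phi> (x, y, z)\<bar> \<le> K * (1 + \<bar>x\<bar> + \<bar>y\<bar> + \<bar>z\<bar>)"
    and central: "\<And>x y z. \<bar>\<Phi> (x, y, z) - \<Phi> (x, y, 0)\<bar> \<le> M * (1 + \<bar>z\<bar> / exp b)"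
  shows "\<bar>(\<integral>(s, u, t). gdens a s * gdens b u * gdens c t * \<Phi> (hmul (hmul (Xg s) (Zg u)) (Yg t)) \<partial>lborel)
       - (\<integral>(t, u, s). gdens c t * gdens b u * gdens a s * \<Phi> (hmul (hmul (Yg t) (Zg u)) (Xg s)) \<partial>lborel)\<bar>
     \<le> 2 * exp (a + c - b) * M"
proof -
  have M_nonneg: "M \<ge> 0"
    using central[of 0 0 0] by simp
  define R where "R = (\<lambda>(s, u, t). gdens a s * gdens c t * (gdens b (u - s * t) - gdens b u) * (\<Phi> (s, t, u) - \<Phi> (s, t, 0)))"
  define Q where "Q = (\<lambda>(s, u, t). ennreal (gdens a s * gdens c t * \<bar>gdens b (u - s * t) - gdens b u\<bar> * (1 + \<bar>u\<bar> / exp b)))"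
  have "ennreal (norm (integral\<^sup>L lborel R)) \<le> (\<integral>\<^sup>+x. norm (R x) \<partial>lborel)"
  proof (cases "integrable lborel R")
    case True
    then show ?thesis by (rule integral_norm_bound_ennreal)
  qed (simp add: not_integrable_integral_eq)
  also have "\<dots> \<le> (\<integral>\<^sup>+x. ennreal M * Q x \<partial>lborel)"
  proof (rule nn_integral_mono)
    fix x :: "real \<times> real \<times> real"
    obtain s u t where x: "x = (s, u, t)" using prod_cases3 by blast
    have "norm (R x) = gdens a s * gdens c t * \<bar>gdens b (u - s * t) - gdens b u\<bar> * \<bar>\<Phi> (s, t, u) - \<Phi> (s, t, 0)\<bar>"
      by (simp add: x R_def abs_mult)
    also have "\<dots> \<le> gdens a s * gdens c t * \<bar>gdens b (u - s * t) - gdens b u\<bar> * (M * (1 + \<bar>u\<bar> / exp b))"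
      by (intro mult_left_mono central) simp
    finally show "ennreal (norm (R x)) \<le> ennreal M * Q x"
      using M_nonneg by (simp add: x Q_def ennreal_mult[symmetric] mult_ac)
  qed
  also have "\<dots> = ennreal M * (\<integral>\<^sup>+x. Q x \<partial>lborel)"
    by (rule nn_integral_cmult) (unfold Q_def, measurable)
  also have "\<dots> \<le> ennreal M * ennreal (2 * exp (a + c - b))"
    unfolding Q_def by (intro mult_left_mono nn_integral_commutator_kernel_le) simp
  finally have "norm (integral\<^sup>L lborel R) \<le> M * (2 * exp (a + c - b))"
    using M_nonneg by (simp add: ennreal_mult[symmetric])
  then show ?thesis
    unfolding gaussian_commutator_eq_integral[OF cont growth] R_def by (simp add: mult_ac)
qed

lemma functional_nu_act_eq_integral:
  fixes \<alpha> :: "heis \<Rightarrow> 'e::banach \<Rightarrow> 'e"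
  assumes "heis_isometric_action \<alpha>" and l: "bounded_linear l"
  shows "l (nu_act \<alpha> a b c \<xi>)
    = (\<integral>(s, u, t). gdens a s * gdens b u * gdens c t * l (\<alpha> (hmul (hmul (Xg s) (Zg u)) (Yg t)) \<xi>) \<partial>lborel)"
proof -
  interpret heis_isometric_action \<alpha> by fact
  obtain K where "K \<ge> 0" and K: "\<And>x y z. norm (\<alpha> (x, y, z) \<xi>) \<le> K * (1 + \<bar>x\<bar> + \<bar>y\<bar> + \<bar>z\<bar>)"
    using orbit_linear_growth by blast
  have "norm (\<alpha> (s, t, u + s * t) \<xi>) \<le> K * ((1 + \<bar>s\<bar>) * (1 + \<bar>u\<bar>) * (1 + \<bar>t\<bar>))" for s u t
  proof -
    have "\<bar>u + s * t\<bar> \<le> \<bar>u\<bar> + \<bar>s\<bar> * \<bar>t\<bar>"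
      by (metis abs_mult abs_triangle_ineq)
    with K[of s t "u + s * t"] \<open>K \<ge> 0\<close> show ?thesis
      by (meson linear_growth_le_product mult_left_mono order_trans)
  qed
  then show ?thesis
    using bounded_linear_integral_gaussian[OF l, of "\<lambda>(s, u, t). \<alpha> (s, t, u + s * t) \<xi>" K a b c]
    by (simp add: nu_act_def hmul_XZY case_prod_beta continuous_intros)
qed

lemma functional_nut_act_eq_integral:
  fixes \<alpha> :: "heis \<Rightarrow> 'e::banach \<Rightarrow> 'e"
  assumes "heis_isometric_action \<alpha>" and l: "bounded_linear l"
  shows "l (nut_act \<alpha> c b a \<xi>)
    = (\<integral>(t, u, s). gdens c t * gdens b u * gdens a s * l (\<alpha> (hmul (hmul (Yg t) (Zg u)) (Xg s)) \<xi>) \<partial>lborel)"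
proof -
  interpret heis_isometric_action \<alpha> by fact
  obtain K where "K \<ge> 0" and K: "\<And>x y z. norm (\<alpha> (x, y, z) \<xi>) \<le> K * (1 + \<bar>x\<bar> + \<bar>y\<bar> + \<bar>z\<bar>)"
    using orbit_linear_growth by blast
  have "norm (\<alpha> (s, t, u) \<xi>) \<le> K * ((1 + \<bar>t\<bar>) * (1 + \<bar>u\<bar>) * (1 + \<bar>s\<bar>))" for s u t
    using K[of s t u] linear_growth_le_product[of u u s t] \<open>K \<ge> 0\<close>
    by (simp add: mult_ac) (meson mult_left_mono order_trans)
  then show ?thesis
    using bounded_linear_integral_gaussian[OF l, of "\<lambda>(t, u, s). \<alpha> (s, t, u) \<xi>" K c b a]
    by (simp add: nut_act_def hmul_YZX case_prod_beta continuous_intros)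
qed

lemma (in heis_isometric_action) functional_central_displacement_le:
  assumes "bounded_linear l" "\<And>x. \<bar>l x\<bar> \<le> norm x" "\<delta> > 0"
  shows "\<bar>l (\<alpha> (x, y, z) \<xi>) - l (\<alpha> (x, y, 0) \<xi>)\<bar> \<le> (SUP r\<in>{-\<delta>..\<delta>}. norm (\<alpha> (Zg r) \<xi> - \<xi>)) * (1 + \<bar>z\<bar> / \<delta>)"
proof -
  have "\<bar>l (\<alpha> (x, y, z) \<xi>) - l (\<alpha> (x, y, 0) \<xi>)\<bar> \<le> norm (\<alpha> (x, y, z) \<xi> - \<alpha> (x, y, 0) \<xi>)"
    using assms(2) linear_diff[OF bounded_linear.linear[OF assms(1)]] by metis
  also have "\<dots> = norm (\<alpha> (Zg z) \<xi> - \<xi>)"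
    using hmul_Zg_right[of x y 0 z] act_hmul norm_act_diff by (metis add_0)
  also have "\<dots> \<le> (SUP r\<in>{-\<delta>..\<delta>}. norm (\<alpha> (Zg r) \<xi> - \<xi>)) * (1 + \<bar>z\<bar> / \<delta>)"
    by (rule displacement_le_SUP[OF one_parameter_Zg assms(3)])
  finally show ?thesis .
qed

lemma functional_commutator_le:
  fixes \<alpha> :: "heis \<Rightarrow> 'e::banach \<Rightarrow> 'e"
  assumes "heis_isometric_action \<alpha>" and l: "bounded_linear l" "\<And>x. \<bar>l x\<bar> \<le> norm x"
  shows "\<bar>l (nu_act \<alpha> a b c \<xi>) - l (nut_act \<alpha> c b a \<xi>)\<bar>
    \<le> 2 * exp (a + c - b) * (SUP r\<in>{- exp b .. exp b}. norm (\<alpha> (Zg r) \<xi> - \<xi>))"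
proof -
  interpret heis_isometric_action \<alpha> by fact
  obtain K where K: "\<And>x y z. norm (\<alpha> (x, y, z) \<xi>) \<le> K * (1 + \<bar>x\<bar> + \<bar>y\<bar> + \<bar>z\<bar>)"
    using orbit_linear_growth by blast
  show ?thesis
    unfolding functional_nu_act_eq_integral[OF assms(1) l(1)] functional_nut_act_eq_integral[OF assms(1) l(1)]
  proof (rule gaussian_commutator_estimate)
    show "continuous_on UNIV (\<lambda>g. l (\<alpha> g \<xi>))"
      by (intro continuous_on_compose2[OF linear_continuous_on[OF l(1)]] continuous_intros) auto
    show "\<bar>l (\<alpha> (x, y, z) \<xi>)\<bar> \<le> K * (1 + \<bar>x\<bar> + \<bar>y\<bar> + \<bar>z\<bar>)" for x y z
      using l(2) K order_trans by blast
    show "\<bar>l (\<alpha> (x, y, z) \<xi>) - l (\<alpha> (x, y, 0) \<xi>)\<bar>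
        \<le> (SUP r\<in>{- exp b .. exp b}. norm (\<alpha> (Zg r) \<xi> - \<xi>)) * (1 + \<bar>z\<bar> / exp b)" for x y z
      by (rule functional_central_displacement_le[OF l]) simp
  qed
qed

theorem lemma4p5:
  fixes \<alpha> :: "heis \<Rightarrow> 'e::banach \<Rightarrow> 'e"
    and a b c :: real and \<xi> :: 'e
  assumes "uniformly_convex TYPE('e)"
    and "cont_affine_isometric_action \<alpha>"
  shows "norm (nu_act \<alpha> a b c \<xi> - nut_act \<alpha> c b a \<xi>)
           \<le> 2 * exp (a + c - b) * (SUP r\<in>{- exp b .. exp b}. norm (\<alpha> (Zg r) \<xi> - \<xi>))"
proof -
  have action: "heis_isometric_action \<alpha>"
    using assms(2) by unfold_locales
  obtain l where l: "bounded_linear l" "\<And>x. \<bar>l x\<bar> \<le> norm x"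
    and norming: "l (nu_act \<alpha> a b c \<xi> - nut_act \<alpha> c b a \<xi>) = norm (nu_act \<alpha> a b c \<xi> - nut_act \<alpha> c b a \<xi>)"
    using norming_functional_exists by blast
  have "norm (nu_act \<alpha> a b c \<xi> - nut_act \<alpha> c b a \<xi>) = l (nu_act \<alpha> a b c \<xi>) - l (nut_act \<alpha> c b a \<xi>)"
    using norming linear_diff[OF bounded_linear.linear[OF l(1)]] by simp
  also have "\<dots> \<le> 2 * exp (a + c - b) * (SUP r\<in>{- exp b .. exp b}. norm (\<alpha> (Zg r) \<xi> - \<xi>))"
    using functional_commutator_le[OF action l] by (rule abs_le_D1)
  finally show ?thesis .
qed

end
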